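(* The assignment $$\Psi:\quad\star \mapsto \bigoplus_{\mathbf{s} \in \widehat{\rm OSeq}[d]} \mathbf{s} \quad\text{ and }\quad b \mapsto M(b),$$ with $M(b)_{(\mathbf{t},\mathbf{s})} \in \operatorname{Hom}_{\mathcal{OB}(m-n)}(\mathbf{s},\mathbf{t})$ equal to the unique subdiagram of $b$ in $\widehat{\mathcal{B}}[d]_\mathbf{s}^\mathbf{t}$, or zero if such a diagram does not exist, defines a faithful functor from ${\rm Br}_d(\delta)$ to ${\rm Mat}(\mathcal{OB}(m-n))$.
   Context: Work over $\mathbb{C}$. Fix $m,n\in\mathbb{Z}_{\geq 0}$ and $d\in\mathbb{Z}_{\geq0}$. Let $V$ be a superspace of superdimension $2m|2n$ (even case) or $2m+1|2n$ (odd case) with a non-degenerate supersymmetric bilinear form, and let $\delta$ be its supertrace, i.e. $\delta=2m-2n$ in the even case and $\delta=2m+1-2n$ in the odd case. ${\rm Br}_d(\delta)$ is the Brauer algebra, with basis the set $\mathcal{B}[d]$ of Brauer diagrams (partitions of $\{1,\dots,d,1^*,\dots,d^*\}$ into $d$ two-element subsets), multiplication by concatenation with each removed closed loop giving a factor $\delta$; it is generated by $s_i$ (crossing strands $i,i+1$) and $e_i$ (cap-cup at $i,i+1$). It is regarded as a category with one object $\star$. Set ${\rm OSeq}[d]=\{\wedge,\vee\}^{\times d}$ and $\widehat{\rm OSeq}[d]=\{\wedge,\vee,\circ\}^{\times d}$ (generalized orientations). $\widehat{\mathcal{B}}[d]$ is the set of generalized Brauer diagrams on $2d$ vertices, i.e.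 partitions of $\{1,\dots,d,1^*,\dots,d^*\}$ into subsets of cardinality 1 or 2. For $\mathbf{s},\mathbf{t}\in\widehat{\rm OSeq}[d]$, $\widehat{\mathcal{B}}[d]_\mathbf{s}^\mathbf{t}$ is the set of $b\in\widehat{\mathcal{B}}[d]$ such that $(\mathbf{t},b,\mathbf{s})$ is oriented: if $\{i,j\}\in b$, $i\neq j$, then $\{\mathbf{t}_i,\mathbf{t}_j\}=\{\wedge,\vee\}$; if $\{i^*,j^*\}\in b$, $i\neq j$, then $\{\mathbf{s}_i,\mathbf{s}_j\}=\{\wedge,\vee\}$; if $\{i,j^*\}\in b$ then $\mathbf{t}_i=\mathbf{s}_j\in\{\wedge,\vee\}$; if $\{i\}\in b$ (resp. $\{i^*\}\in b$) then $\mathbf{t}_i=\circ$ (resp. $\mathbf{s}_i=\circ$). The oriented Brauer category $\mathcal{OB}(m-n)$ is the $\mathbb{C}$-linear category whose objects are generalized orientation sequences (of any finite length), with $\operatorname{Hom}(\mathbf{s},\mathbf{t})$ having basis $\widehat{\mathcal{B}}_\mathbf{s}^\mathbf{t}$, and composition by stacking diagrams, gluing along $\mathbf{s}$, removing internal $\circ$'s and internal closed circles, each removed circle contributing a factor $m-n$. ${\rm Mat}(\mathcal{OB}(m-n))$ is its additive closure: objects are formal finite direct sums of objects, morphisms are matrices of morphisms with matrix composition. A generalized Brauer diagram $b'$ is a subdiagram of $b$ if $b'$ refines the partition $b$, i.e. is obtained from $b$ by removing some arcs and replacing their endpoints by singletons ($\circ$'s). *)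

theory Defs
  imports Complex_Main
begin

text \<open>Vertices of a diagram on 2d vertices: Inl i is the top vertex i, Inr i is the
bottom vertex i*, with indices 0..d-1 (0-based instead of 1..d).\<close>

type_synonym vert = "nat + nat"
type_synonym diag = "vert set set"

definition verts :: "nat \<Rightarrow> vert set" where
  "verts d = Inl ` {..<d} \<union> Inr ` {..<d}"

definition gen_brauer :: "nat \<Rightarrow> diag set" where
  "gen_brauer d = {b. (\<forall>B\<in>b. B \<subseteq> verts d \<and> (card B = 1 \<or> card B = 2))
                      \<and> (\<forall>x\<in>verts d. \<exists>!B. B \<in> b \<and> x \<in> B)}"

definition brauer :: "nat \<Rightarrow> diag set" where
  "brauer d = {b \<in> gen_brauer d. \<forall>B\<in>b. card B = 2}"

definition subdiagram :: "nat \<Rightarrow> diag \<Rightarrow> diag \<Rightarrow> bool" where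
  "subdiagram d b' b \<longleftrightarrow> b' \<in> gen_brauer d \<and> (\<forall>B'\<in>b'. \<exists>B\<in>b. B' \<subseteq> B)"

datatype ori = Up | Down | Circ   \<comment> \<open>wedge, vee, circ\<close>

definition oseq_hat :: "nat \<Rightarrow> ori list set" where
  "oseq_hat d = {s. length s = d}"

definition oriented :: "ori list \<Rightarrow> diag \<Rightarrow> ori list \<Rightarrow> bool" where
  "oriented t b s \<longleftrightarrow> (\<forall>B\<in>b.
      (\<forall>i j. B = {Inl i, Inl j} \<and> i \<noteq> j \<longrightarrow> {t!i, t!j} = {Up, Down})
    \<and> (\<forall>i j. B = {Inr i, Inr j} \<and> i \<noteq> j \<longrightarrow> {s!i, s!j} = {Up, Down})
    \<and> (\<forall>i j. B = {Inl i, Inr j} \<longrightarrow> t!i = s!j \<and> t!i \<in> {Up, Down})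
    \<and> (\<forall>i. B = {Inl i} \<longrightarrow> t!i = Circ)
    \<and> (\<forall>i. B = {Inr i} \<longrightarrow> s!i = Circ))"

definition hatB :: "nat \<Rightarrow> ori list \<Rightarrow> ori list \<Rightarrow> diag set" where
  "hatB d s t = {b \<in> gen_brauer d. oriented t b s}"

datatype lvl = Top nat | Mid nat | Bot nat

definition up_v :: "vert \<Rightarrow> lvl" where
  "up_v x = (case x of Inl i \<Rightarrow> Top i | Inr i \<Rightarrow> Mid i)"

definition lo_v :: "vert \<Rightarrow> lvl" where
  "lo_v x = (case x of Inl i \<Rightarrow> Mid i | Inr i \<Rightarrow> Bot i)"

definition outer_v :: "vert \<Rightarrow> lvl" where
  "outer_v x = (case x of Inl i \<Rightarrow> Top i | Inr i \<Rightarrow> Bot i)"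

text \<open>Graph obtained by placing b1 on top of b2 (bottom of b1 glued to top of b2).\<close>
definition stack_rel :: "diag \<Rightarrow> diag \<Rightarrow> (lvl \<times> lvl) set" where
  "stack_rel b1 b2 =
     {(up_v x, up_v y) | x y. \<exists>B\<in>b1. x \<in> B \<and> y \<in> B}
   \<union> {(lo_v x, lo_v y) | x y. \<exists>B\<in>b2. x \<in> B \<and> y \<in> B}"

text \<open>The resulting diagram (b1 above b2), after removing internal components.\<close>
definition comp_diag :: "nat \<Rightarrow> diag \<Rightarrow> diag \<Rightarrow> diag" where
  "comp_diag d b1 b2 =
     {{x \<in> verts d. (outer_v y, outer_v x) \<in> (stack_rel b1 b2)\<^sup>*} | y. y \<in> verts d}"

text \<open>Number of removed closed circles (internal components with at least two vertices;
  internal components with one vertex are removed circ's).\<close>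
definition n_loops :: "nat \<Rightarrow> diag \<Rightarrow> diag \<Rightarrow> nat" where
  "n_loops d b1 b2 = card
     {{v. (Mid j, v) \<in> (stack_rel b1 b2)\<^sup>*} | j. j < d
        \<and> (\<forall>x\<in>verts d. (Mid j, outer_v x) \<notin> (stack_rel b1 b2)\<^sup>*)
        \<and> 2 \<le> card {v. (Mid j, v) \<in> (stack_rel b1 b2)\<^sup>*}}"

definition bvec :: "diag \<Rightarrow> diag \<Rightarrow> complex" where
  "bvec b = (\<lambda>c. if c = b then 1 else 0)"

text \<open>Elements: complex linear combinations of Brauer diagrams (coefficient functions).\<close>
definition br_alg :: "nat \<Rightarrow> (diag \<Rightarrow> complex) set" where
  "br_alg d = {x. \<forall>c. c \<notin> brauer d \<longrightarrow> x c = 0}"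

definition br_mult :: "nat \<Rightarrow> complex \<Rightarrow> (diag \<Rightarrow> complex) \<Rightarrow> (diag \<Rightarrow> complex) \<Rightarrow> diag \<Rightarrow> complex" where
  "br_mult d \<delta> x y = (\<lambda>c. \<Sum>b1\<in>brauer d. \<Sum>b2\<in>brauer d.
      if comp_diag d b1 b2 = c then x b1 * y b2 * \<delta> ^ n_loops d b1 b2 else 0)"

definition br_one :: "nat \<Rightarrow> diag \<Rightarrow> complex" where
  "br_one d = bvec {{Inl i, Inr i} | i. i < d}"

text \<open>Morphisms in Hom(s,t) are coefficient functions supported on hatB d s t.
  Composition f o g (f above g), bilinear, each removed circle giving a factor q.\<close>
definition ob_comp :: "nat \<Rightarrow> complex \<Rightarrow> (diag \<Rightarrow> complex) \<Rightarrow> (diag \<Rightarrow> complex) \<Rightarrow> diag \<Rightarrow> complex" where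
  "ob_comp d q f g = (\<lambda>c. \<Sum>b1\<in>gen_brauer d. \<Sum>b2\<in>gen_brauer d.
      if comp_diag d b1 b2 = c then f b1 * g b2 * q ^ n_loops d b1 b2 else 0)"

definition ob_id :: "nat \<Rightarrow> ori list \<Rightarrow> diag" where
  "ob_id d s = {{Inl i, Inr i} | i. i < d \<and> s!i \<noteq> Circ}
             \<union> {{Inl i} | i. i < d \<and> s!i = Circ} \<union> {{Inr i} | i. i < d \<and> s!i = Circ}"

text \<open>Endomorphisms in Mat(OB(q)) of the object (direct sum over oseq_hat d of s):
  matrices indexed by (t,s), entry (t,s) in Hom(s,t). Entries outside the index set are 0.\<close>
type_synonym matmor = "ori list \<times> ori list \<Rightarrow> diag \<Rightarrow> complex"

definition mat_comp :: "nat \<Rightarrow> complex \<Rightarrow> matmor \<Rightarrow> matmor \<Rightarrow> matmor" where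
  "mat_comp d q E F = (\<lambda>(u, s). if u \<in> oseq_hat d \<and> s \<in> oseq_hat d
       then (\<lambda>c. \<Sum>t\<in>oseq_hat d. ob_comp d q (E (u, t)) (F (t, s)) c) else (\<lambda>_. 0))"

definition mat_id :: "nat \<Rightarrow> matmor" where
  "mat_id d = (\<lambda>(t, s). if t \<in> oseq_hat d \<and> s \<in> oseq_hat d \<and> t = s
       then bvec (ob_id d s) else (\<lambda>_. 0))"

definition Mb :: "nat \<Rightarrow> diag \<Rightarrow> matmor" where
  "Mb d b = (\<lambda>(t, s). if t \<in> oseq_hat d \<and> s \<in> oseq_hat d
       \<and> (\<exists>b'. b' \<in> hatB d s t \<and> subdiagram d b' b)
     then bvec (THE b'. b' \<in> hatB d s t \<and> subdiagram d b' b) else (\<lambda>_. 0))"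

definition Psi :: "nat \<Rightarrow> (diag \<Rightarrow> complex) \<Rightarrow> matmor" where
  "Psi d x = (\<lambda>ts c. \<Sum>b\<in>brauer d. x b * Mb d b ts c)"

end

theory Submission
  imports Defs "HOL-Library.FuncSet"
begin

text \<open>A Brauer diagram \<open>b\<close> is a fixed-point-free involution of the vertices, and \<open>M(b)\<close> at
  orientations \<open>(t, s)\<close> is nonzero exactly when every arc of \<open>b\<close> either joins two \<open>\<circ>\<close>'s or
  is consistently oriented; the subdiagram is then obtained by cutting the \<open>\<circ>\<close>-arcs.
  Stacking \<open>b1\<close> on \<open>b2\<close> yields the graph generated by two involutions, a disjoint union of
  paths, whose ends are outer vertices, and of closed loops through the middle row.
  Fix the outer orientations \<open>u\<close>, \<open>s\<close>. A middle orientation \<open>t\<close> contributes to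
  \<open>\<Sum>t. M(b1)(u,t) \<circ> M(b2)(t,s)\<close> iff it is coherent along every component: on a path it is forced
  by the ends, which must themselves be compatible in \<open>b1 b2\<close>, while on a closed loop it is
  either all \<open>\<circ>\<close> (the loop is erased, factor 1) or one of two orientations (the loop is
  removed in \<open>OB(q)\<close>, factor \<open>q\<close>). Summing gives \<open>(2 q + 1)\<^sup>n M(b1 b2)\<close> with
  \<open>n\<close> the number of loops, and \<open>\<delta> = 2 q + 1\<close>. Faithfulness: at an orientation of \<open>b\<close> without
  \<open>\<circ>\<close>'s, the coordinate \<open>b\<close> of \<open>M(b')\<close> is nonzero only for \<open>b' = b\<close>.\<close>

lemma gen_brauer_block_unique: "b \<in> gen_brauer d \<Longrightarrow> x \<in> verts d \<Longrightarrow> \<exists>!B. B \<in> b \<and> x \<in> B"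
  unfolding gen_brauer_def by blast

lemma gen_brauer_block_subset: "b \<in> gen_brauer d \<Longrightarrow> B \<in> b \<Longrightarrow> B \<subseteq> verts d"
  unfolding gen_brauer_def by blast

lemma brauer_gen_brauer: "b \<in> brauer d \<Longrightarrow> b \<in> gen_brauer d"
  unfolding brauer_def by blast

lemma brauer_block_card: "b \<in> brauer d \<Longrightarrow> B \<in> b \<Longrightarrow> card B = 2"
  unfolding brauer_def by blast

lemma finite_verts: "finite (verts d)"
  unfolding verts_def by simp

lemma verts_iff: "x \<in> verts d \<longleftrightarrow> (case x of Inl i \<Rightarrow> i < d | Inr i \<Rightarrow> i < d)"
  unfolding verts_def by (cases x) auto

lemma finite_gen_brauer: "finite (gen_brauer d)"
proof (rule finite_subset)
  show "gen_brauer d \<subseteq> Pow (Pow (verts d))" unfolding gen_brauer_def by blast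
qed (simp add: finite_verts)

lemma finite_brauer: "finite (brauer d)"
  by (rule finite_subset[OF _ finite_gen_brauer]) (auto simp: brauer_def)

section \<open>Brauer diagrams as involutions\<close>

text \<open>A generalized Brauer diagram is an involution of the vertex set; Brauer diagrams are
  exactly the fixed-point-free ones.\<close>

definition partner :: "diag \<Rightarrow> vert \<Rightarrow> vert" where
  "partner b x = (THE y. {x,y} \<in> b)"

lemma gen_brauer_block_of:
  assumes b: "b \<in> gen_brauer d" and x: "x \<in> verts d"
  obtains y where "{x,y} \<in> b" "\<And>B. B \<in> b \<Longrightarrow> x \<in> B \<Longrightarrow> B = {x,y}"
proof -
  obtain B where B: "B \<in> b" "x \<in> B" and u: "\<And>B'. B' \<in> b \<Longrightarrow> x \<in> B' \<Longrightarrow> B' = B"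
    using gen_brauer_block_unique[OF b x] by blast
  have "card B = 1 \<or> card B = 2" using b B(1) unfolding gen_brauer_def by blast
  then obtain y where "B = {x,y}"
  proof
    assume "card B = 1"
    then show ?thesis using B(2) that[of x] by (auto simp: card_1_singleton_iff)
  next
    assume "card B = 2"
    then obtain a c where "B = {a,c}" by (auto simp: card_2_iff)
    then show ?thesis using B(2) that by (metis insert_commute insertE singletonD)
  qed
  with B u that show ?thesis by blast
qed

lemma
  assumes b: "b \<in> gen_brauer d" and x: "x \<in> verts d"
  shows partner_block: "{x, partner b x} \<in> b"
    and block_eq_partner: "\<And>B. B \<in> b \<Longrightarrow> x \<in> B \<Longrightarrow> B = {x, partner b x}"
proof -
  obtain y where y: "{x,y} \<in> b" "\<And>B. B \<in> b \<Longrightarrow> x \<in> B \<Longrightarrow> B = {x,y}"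
    using gen_brauer_block_of[OF b x] by blast
  have py: "partner b x = y" unfolding partner_def
  proof (rule the_equality)
    fix z assume "{x, z} \<in> b"
    with y(2)[of "{x,z}"] show "z = y" by (auto simp: doubleton_eq_iff)
  qed (rule y(1))
  show "{x, partner b x} \<in> b" unfolding py by (rule y(1))
  show "\<And>B. B \<in> b \<Longrightarrow> x \<in> B \<Longrightarrow> B = {x, partner b x}" unfolding py by (rule y(2))
qed

lemma partner_in_verts: "b \<in> gen_brauer d \<Longrightarrow> x \<in> verts d \<Longrightarrow> partner b x \<in> verts d"
  using gen_brauer_block_subset partner_block by blast

lemma partner_partner:
  assumes b: "b \<in> gen_brauer d" and x: "x \<in> verts d"
  shows "partner b (partner b x) = x"
proof -
  have "{x, partner b x} = {partner b x, partner b (partner b x)}"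
    using block_eq_partner[OF b partner_in_verts[OF b x] partner_block[OF b x]] by auto
  thus ?thesis by (auto simp: doubleton_eq_iff)
qed

lemma partner_neq:
  assumes b: "b \<in> brauer d" and x: "x \<in> verts d"
  shows "partner b x \<noteq> x"
  using brauer_block_card[OF b partner_block[OF brauer_gen_brauer[OF b] x]] by auto

lemma gen_brauer_block_partner:
  assumes b: "b \<in> gen_brauer d" and B: "B \<in> b"
  shows "\<exists>x\<in>verts d. B = {x, partner b x}"
proof -
  have "card B \<noteq> 0" using b B unfolding gen_brauer_def by fastforce
  then obtain x where "x \<in> B" by fastforce
  moreover have "x \<in> verts d" using gen_brauer_block_subset[OF b B] \<open>x \<in> B\<close> by auto
  ultimately show ?thesis using block_eq_partner[OF b _ B] by blast
qed

section \<open>Oriented subdiagrams\<close>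

text \<open>\<open>outgoing t s x\<close> says that the strand at \<open>x\<close> is directed out of the diagram:
  a wedge on top or a vee at the bottom.\<close>

definition vlabel :: "ori list \<Rightarrow> ori list \<Rightarrow> vert \<Rightarrow> ori" where
  "vlabel t s x = (case x of Inl i \<Rightarrow> t!i | Inr i \<Rightarrow> s!i)"

definition outgoing :: "ori list \<Rightarrow> ori list \<Rightarrow> vert \<Rightarrow> bool" where
  "outgoing t s x = ((vlabel t s x = Up) = isl x)"

lemma oriented_iff_blocks: "oriented t b s \<longleftrightarrow> (\<forall>B\<in>b. oriented t {B} s)"
  by (simp add: oriented_def)

lemma oriented_singleton_iff: "oriented t {{x}} s \<longleftrightarrow> vlabel t s x = Circ"
  by (cases x) (auto simp: oriented_def vlabel_def doubleton_eq_iff)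

lemma ori_pair_iff: "({a, b} = {Up, Down}) \<longleftrightarrow> (a \<noteq> Circ \<and> b \<noteq> Circ \<and> (a = Up) \<noteq> (b = Up))"
  by (cases a; cases b) (auto simp: doubleton_eq_iff)

lemma oriented_top_cap: "i \<noteq> j \<Longrightarrow> oriented t {{Inl i, Inl j}} s \<longleftrightarrow> {t!i, t!j} = {Up,Down}"
  unfolding oriented_def by (auto simp: doubleton_eq_iff insert_commute)

lemma oriented_bot_cup: "i \<noteq> j \<Longrightarrow> oriented t {{Inr i, Inr j}} s \<longleftrightarrow> {s!i, s!j} = {Up,Down}"
  unfolding oriented_def by (auto simp: doubleton_eq_iff insert_commute)

lemma oriented_through: "oriented t {{Inl i, Inr j}} s \<longleftrightarrow> (t!i = s!j \<and> t!i \<in> {Up,Down})"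
  unfolding oriented_def by (auto simp: doubleton_eq_iff)

lemma oriented_through_sym: "oriented t {{Inr j, Inl i}} s \<longleftrightarrow> (t!i = s!j \<and> t!i \<in> {Up,Down})"
  using oriented_through by (simp add: insert_commute)

lemma oriented_arc_iff:
  assumes "x \<noteq> y"
  shows "oriented t {{x,y}} s \<longleftrightarrow>
    vlabel t s x \<noteq> Circ \<and> vlabel t s y \<noteq> Circ \<and> outgoing t s x \<noteq> outgoing t s y"
proof (cases x; cases y)
  fix i j assume "x = Inl i" "y = Inl j" thus ?thesis using assms
    by (simp add: oriented_top_cap vlabel_def outgoing_def ori_pair_iff)
next
  fix i j assume "x = Inl i" "y = Inr j" thus ?thesis
    by (cases "t!i"; cases "s!j") (simp_all add: oriented_through vlabel_def outgoing_def)
next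
  fix i j assume "x = Inr i" "y = Inl j" thus ?thesis
    by (cases "t!j"; cases "s!i") (simp_all add: oriented_through_sym vlabel_def outgoing_def)
next
  fix i j assume "x = Inr i" "y = Inr j" thus ?thesis using assms
    by (simp add: oriented_bot_cup vlabel_def outgoing_def ori_pair_iff)
qed

text \<open>\<open>orientable d b t s\<close> is the criterion for \<open>(t, b', s)\<close> to be oriented for some
  subdiagram \<open>b'\<close> of \<open>b\<close>; \<open>cut_circ\<close> constructs that subdiagram.\<close>

definition orientable :: "nat \<Rightarrow> diag \<Rightarrow> ori list \<Rightarrow> ori list \<Rightarrow> bool" where
 "orientable d b t s \<longleftrightarrow> (\<forall>x\<in>verts d. (vlabel t s x = Circ \<longleftrightarrow> vlabel t s (partner b x) = Circ)
      \<and> (vlabel t s x \<noteq> Circ \<longrightarrow> outgoing t s x \<noteq> outgoing t s (partner b x)))"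

definition cut_circ :: "nat \<Rightarrow> diag \<Rightarrow> (vert \<Rightarrow> ori) \<Rightarrow> diag" where
  "cut_circ d b l = {B\<in>b. \<forall>x\<in>B. l x \<noteq> Circ} \<union> {{x} | x. x \<in> verts d \<and> l x = Circ}"

lemma cut_circ_blocks:
  assumes b: "b \<in> brauer d" and B: "B \<in> cut_circ d b l"
  shows "(\<exists>x\<in>verts d. B = {x, partner b x} \<and> B \<in> b \<and> l x \<noteq> Circ \<and> l (partner b x) \<noteq> Circ)
      \<or> (\<exists>x\<in>verts d. B = {x} \<and> l x = Circ)"
  using B gen_brauer_block_partner[OF brauer_gen_brauer[OF b]] unfolding cut_circ_def by fastforce

lemma cut_circ_arc:
  assumes b: "b \<in> brauer d" and ok: "orientable d b t s" and x: "x \<in> verts d"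
    and nc: "vlabel t s x \<noteq> Circ"
  shows "{x, partner b x} \<in> cut_circ d b (vlabel t s)"
proof -
  have "vlabel t s (partner b x) \<noteq> Circ" using ok x nc unfolding orientable_def by blast
  then show ?thesis unfolding cut_circ_def using partner_block[OF brauer_gen_brauer[OF b] x] nc by auto
qed

lemma cut_circ_block_of:
  assumes b: "b \<in> brauer d" and ok: "orientable d b t s" and x: "x \<in> verts d"
  shows "\<exists>!B. B \<in> cut_circ d b (vlabel t s) \<and> x \<in> B"
proof (cases "vlabel t s x = Circ")
  case True
  then show ?thesis unfolding cut_circ_def using x by (intro ex1I[of _ "{x}"]) auto
next
  case False
  have "B = {x, partner b x}" if "B \<in> cut_circ d b (vlabel t s)" "x \<in> B" for B
    using that False block_eq_partner[OF brauer_gen_brauer[OF b] x] unfolding cut_circ_def by auto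
  then show ?thesis using cut_circ_arc[OF b ok x False] by blast
qed

lemma cut_circ_gen_brauer:
  assumes b: "b \<in> brauer d" and ok: "orientable d b t s"
  shows "cut_circ d b (vlabel t s) \<in> gen_brauer d"
  unfolding gen_brauer_def
proof (rule CollectI, rule conjI)
  show "\<forall>B\<in>cut_circ d b (vlabel t s). B \<subseteq> verts d \<and> (card B = 1 \<or> card B = 2)"
  proof
    fix B assume "B \<in> cut_circ d b (vlabel t s)"
    from cut_circ_blocks[OF b this] partner_in_verts[OF brauer_gen_brauer[OF b]] partner_neq[OF b]
    show "B \<subseteq> verts d \<and> (card B = 1 \<or> card B = 2)" by fastforce
  qed
qed (use cut_circ_block_of[OF b ok] in blast)

lemma cut_circ_oriented:
  assumes b: "b \<in> brauer d" and ok: "orientable d b t s"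
  shows "oriented t (cut_circ d b (vlabel t s)) s"
proof (subst oriented_iff_blocks, intro ballI)
  fix B assume "B \<in> cut_circ d b (vlabel t s)"
  from cut_circ_blocks[OF b this] show "oriented t {B} s"
  proof (elim disjE bexE conjE)
    fix x assume x: "x \<in> verts d" "B = {x, partner b x}" "B \<in> b" "vlabel t s x \<noteq> Circ"
      "vlabel t s (partner b x) \<noteq> Circ"
    then have "outgoing t s x \<noteq> outgoing t s (partner b x)"
      using ok unfolding orientable_def by blast
    with x partner_neq[OF b x(1)] show ?thesis by (simp add: oriented_arc_iff)
  qed (simp add: oriented_singleton_iff)
qed

lemma cut_circ_subdiagram:
  assumes b: "b \<in> brauer d" and ok: "orientable d b t s"
  shows "subdiagram d (cut_circ d b (vlabel t s)) b"
  unfolding subdiagram_def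
proof (intro conjI ballI cut_circ_gen_brauer[OF b ok])
  fix B assume "B \<in> cut_circ d b (vlabel t s)"
  then show "\<exists>B0\<in>b. B \<subseteq> B0"
    unfolding cut_circ_def using brauer_gen_brauer[OF b] unfolding gen_brauer_def by blast
qed

lemma partner_cut_circ:
  assumes b: "b \<in> brauer d" and ok: "orientable d b t s" and x: "x \<in> verts d"
  shows "partner (cut_circ d b (vlabel t s)) x = (if vlabel t s x = Circ then x else partner b x)"
proof -
  note block = block_eq_partner[OF cut_circ_gen_brauer[OF b ok] x]
  show ?thesis
  proof (cases "vlabel t s x = Circ")
    case True
    then have "{x} \<in> cut_circ d b (vlabel t s)" unfolding cut_circ_def using x by blast
    from block[OF this insertI1] have "partner (cut_circ d b (vlabel t s)) x = x" by blast
    with True show ?thesis by simp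
  next
    case False
    with block[OF cut_circ_arc[OF b ok x False]] show ?thesis by (auto simp: doubleton_eq_iff)
  qed
qed

lemma oriented_subdiagram_block:
  assumes b: "b \<in> brauer d" and h: "b' \<in> hatB d s t" and sd: "subdiagram d b' b"
    and x: "x \<in> verts d" and B': "B' \<in> b'" "x \<in> B'"
  shows "(B' = {x} \<and> vlabel t s x = Circ)
       \<or> (B' = {x, partner b x} \<and> vlabel t s x \<noteq> Circ \<and> vlabel t s (partner b x) \<noteq> Circ
          \<and> outgoing t s x \<noteq> outgoing t s (partner b x))"
proof -
  obtain B where B: "B \<in> b" "B' \<subseteq> B" using sd B'(1) unfolding subdiagram_def by blast
  have "B = {x, partner b x}" using block_eq_partner[OF brauer_gen_brauer[OF b] x B(1)] B'(2) B(2) by blast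
  then have "B' = {x} \<or> B' = {x, partner b x}" using B(2) B'(2) by blast
  moreover have "oriented t {B'} s"
    using h B'(1) oriented_iff_blocks[of t b' s] unfolding hatB_def by blast
  ultimately show ?thesis
    using oriented_singleton_iff oriented_arc_iff[OF not_sym[OF partner_neq[OF b x]]] by auto
qed

lemma oriented_subdiagram_orientable:
  assumes b: "b \<in> brauer d" and h: "b' \<in> hatB d s t" and sd: "subdiagram d b' b"
  shows "orientable d b t s"
  unfolding orientable_def
proof
  fix x assume x: "x \<in> verts d"
  have gb': "b' \<in> gen_brauer d" using h unfolding hatB_def by blast
  have px: "partner b x \<in> verts d" by (rule partner_in_verts[OF brauer_gen_brauer[OF b] x])
  obtain B' where B': "B' \<in> b'" "x \<in> B'" using gen_brauer_block_unique[OF gb' x] by blast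
  obtain B'' where B'': "B'' \<in> b'" "partner b x \<in> B''" using gen_brauer_block_unique[OF gb' px] by blast
  note key = oriented_subdiagram_block[OF b h sd]
  show "(vlabel t s x = Circ) = (vlabel t s (partner b x) = Circ)
      \<and> (vlabel t s x \<noteq> Circ \<longrightarrow> outgoing t s x \<noteq> outgoing t s (partner b x))"
  proof (cases "B' = {x}")
    case True
    have "x \<notin> B''"
      using gen_brauer_block_unique[OF gb' x] B' B'' True partner_neq[OF b x] by blast
    then have "B'' = {partner b x}" using key[OF px B''] partner_partner[OF brauer_gen_brauer[OF b] x] by auto
    then show ?thesis
      using key[OF x B'] key[OF px B''] True partner_neq[OF b x] partner_neq[OF b px] by auto
  next
    case False then show ?thesis using key[OF x B'] by auto
  qed
qed

lemma oriented_subdiagram_eq_cut_circ: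
  assumes b: "b \<in> brauer d" and h: "b' \<in> hatB d s t" and sd: "subdiagram d b' b"
  shows "b' = cut_circ d b (vlabel t s)"
proof (intro set_eqI iffI)
  have gb': "b' \<in> gen_brauer d" using h unfolding hatB_def by blast
  note key = oriented_subdiagram_block[OF b h sd]
  { fix B' assume B': "B' \<in> b'"
    obtain x where xB: "x \<in> B'" using gb' B' unfolding gen_brauer_def by fastforce
    have x: "x \<in> verts d" using gen_brauer_block_subset[OF gb' B'] xB by blast
    from key[OF x B' xB] show "B' \<in> cut_circ d b (vlabel t s)"
      unfolding cut_circ_def using x partner_block[OF brauer_gen_brauer[OF b] x] by auto }
  fix B assume B: "B \<in> cut_circ d b (vlabel t s)"
  from cut_circ_blocks[OF b B] obtain x where x: "x \<in> verts d"
    and cases: "B = {x, partner b x} \<and> vlabel t s x \<noteq> Circ \<or> B = {x} \<and> vlabel t s x = Circ"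
    by blast
  obtain B' where B': "B' \<in> b'" "x \<in> B'" using gen_brauer_block_unique[OF gb' x] by blast
  from key[OF x B'] cases B' show "B \<in> b'" by auto
qed

lemma Mb_eq_cut_circ:
  assumes b: "b \<in> brauer d"
  shows "Mb d b (t,s) = (if t \<in> oseq_hat d \<and> s \<in> oseq_hat d \<and> orientable d b t s
     then bvec (cut_circ d b (vlabel t s)) else (\<lambda>_. 0))"
proof -
  have cut: "orientable d b t s \<Longrightarrow> cut_circ d b (vlabel t s) \<in> hatB d s t"
    using cut_circ_gen_brauer[OF b] cut_circ_oriented[OF b] unfolding hatB_def by blast
  have ex: "(\<exists>b'. b' \<in> hatB d s t \<and> subdiagram d b' b) \<longleftrightarrow> orientable d b t s"
    using cut cut_circ_subdiagram[OF b] oriented_subdiagram_orientable[OF b] by blast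
  have "(THE b'. b' \<in> hatB d s t \<and> subdiagram d b' b) = cut_circ d b (vlabel t s)"
    if ok: "orientable d b t s"
  proof (rule the_equality)
    show "cut_circ d b (vlabel t s) \<in> hatB d s t \<and> subdiagram d (cut_circ d b (vlabel t s)) b"
      using cut[OF ok] cut_circ_subdiagram[OF b ok] by blast
  qed (use oriented_subdiagram_eq_cut_circ[OF b] in blast)
  with ex show ?thesis unfolding Mb_def by auto
qed

lemma Mb_outside: "\<not> (t \<in> oseq_hat d \<and> s \<in> oseq_hat d) \<Longrightarrow> Mb d b (t,s) = (\<lambda>_. 0)"
  unfolding Mb_def by auto

section \<open>The graph of two involutions\<close>

text \<open>The reflections \<open>k \<mapsto> n - 1 - k\<close> and \<open>k \<mapsto> n - k\<close> of \<open>{0..<n}\<close> move every point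
  that they do not fix across the middle \<open>(n - 1) div 2\<close>.\<close>

lemma nat_halves: "(m::nat) div 2 * 2 \<le> m" "m \<le> m div 2 * 2 + 1"
  by linarith+

lemma reflect_crosses_half:
  "k < n \<Longrightarrow> n - 1 - k \<noteq> k \<Longrightarrow> ((n - 1) div 2 < n - 1 - k) \<noteq> ((n - 1) div 2 < (k::nat))"
  using nat_halves[of "n - 1"] by linarith

lemma reflect'_crosses_half:
  "k < n \<Longrightarrow> 0 < k \<Longrightarrow> n - k \<noteq> k \<Longrightarrow> ((n - 1) div 2 < n - k) \<noteq> ((n - 1) div 2 < (k::nat))"
  using nat_halves[of "n - 1"] by linarith

lemma reflect_fixed_eq_half: "k < (n::nat) \<Longrightarrow> n - 1 - k = k \<Longrightarrow> k = n div 2"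
  by linarith

lemma reflect'_fixed_eq_half: "k < (n::nat) \<Longrightarrow> n - k = k \<Longrightarrow> k = n div 2"
  by linarith

lemma half_lt_half_iff_even: "0 < n \<Longrightarrow> ((n - 1) div 2 < n div 2) \<longleftrightarrow> even (n::nat)"
  by (cases n) (auto elim: oddE)

lemma half_reflect_fixed_iff_odd: "0 < m \<Longrightarrow> (m - 1 - m div 2 = m div 2) \<longleftrightarrow> odd (m::nat)"
  by presburger

lemma half_reflect'_fixed_iff_even: "(m - m div 2 = m div 2) \<longleftrightarrow> even (m::nat)"
  by presburger

definition step_rel :: "('a \<Rightarrow> 'a) \<Rightarrow> ('a \<Rightarrow> 'a) \<Rightarrow> ('a \<times> 'a) set" where
  "step_rel A B = {(v, A v) | v. True} \<union> {(v, B v) | v. True}"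

lemma step_rel_iff: "(a, c) \<in> step_rel A B \<longleftrightarrow> c = A a \<or> c = B a"
  unfolding step_rel_def by blast

lemma step_rel_commute: "step_rel A B = step_rel B A"
  unfolding step_rel_def by blast

lemma rtrancl_step_rel_restrict:
  assumes inv: "\<And>y z. (y, z) \<in> step_rel A B \<Longrightarrow> P y \<Longrightarrow> P z"
  shows "(a, c) \<in> (step_rel (\<lambda>v. if P v then A v else v) (\<lambda>v. if P v then B v else v))\<^sup>*
    \<longleftrightarrow> a = c \<or> ((a, c) \<in> (step_rel A B)\<^sup>* \<and> P a)"
proof
  assume "(a, c) \<in> (step_rel (\<lambda>v. if P v then A v else v) (\<lambda>v. if P v then B v else v))\<^sup>*"
  then show "a = c \<or> ((a, c) \<in> (step_rel A B)\<^sup>* \<and> P a)"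
  proof induction
    case (step y z)
    then have "z = y \<or> ((y, z) \<in> step_rel A B \<and> P y)" by (auto simp: step_rel_iff split: if_splits)
    with step.IH show ?case by (auto intro: rtrancl_into_rtrancl)
  qed simp
next
  have path: "P y" if "(a, y) \<in> (step_rel A B)\<^sup>*" "P a" for y
    using that(1) by induction (use that(2) inv in auto)
  assume "a = c \<or> ((a, c) \<in> (step_rel A B)\<^sup>* \<and> P a)"
  then show "(a, c) \<in> (step_rel (\<lambda>v. if P v then A v else v) (\<lambda>v. if P v then B v else v))\<^sup>*"
  proof
    assume h: "(a, c) \<in> (step_rel A B)\<^sup>* \<and> P a"
    then have "(a, c) \<in> (step_rel A B)\<^sup>*" by simp
    then show ?thesis
    proof induction
      case (step y z)
      have "P y" using path[OF step.hyps(1)] h by blast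
      then have "(y, z) \<in> step_rel (\<lambda>v. if P v then A v else v) (\<lambda>v. if P v then B v else v)"
        using step.hyps(2) by (simp add: step_rel_iff)
      with step.IH show ?case by (rule rtrancl_into_rtrancl)
    qed simp
  qed simp
qed

text \<open>The graph generated by two involutions \<open>A\<close>, \<open>B\<close> of a finite set is a disjoint union
  of paths, whose two ends are the fixed points of \<open>A\<close> or \<open>B\<close>, and of cycles. Along a
  component one walks with the rotation \<open>B \<circ> A\<close>.\<close>

locale involution_pair =
  fixes A B :: "'a \<Rightarrow> 'a" and L :: "'a set"
  assumes invA: "\<And>x. A (A x) = x" and invB: "\<And>x. B (B x) = x"
    and finL: "finite L" and AL: "\<And>x. x \<in> L \<Longrightarrow> A x \<in> L" and BL: "\<And>x. x \<in> L \<Longrightarrow> B x \<in> L"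
begin

definition rot where "rot = B \<circ> A"

lemma inj_rot: "inj rot"
proof (rule injI)
  fix a b assume "rot a = rot b"
  then have "A (B (rot a)) = A (B (rot b))" by simp
  then show "a = b" by (simp add: rot_def invA invB)
qed

lemma rot_pow_in: "x \<in> L \<Longrightarrow> (rot ^^ k) x \<in> L"
  by (induction k) (auto simp: rot_def AL BL)

lemma rot_periodic: assumes "x \<in> L" shows "\<exists>n>0. (rot ^^ n) x = x"
proof -
  have "{y. \<exists>n. y = (rot ^^ n) x} \<subseteq> L" using rot_pow_in[OF assms] by auto
  hence "finite {y. \<exists>n. y = (rot ^^ n) x}" using finL finite_subset by blast
  from funpow_inj_finite[OF inj_rot this] show ?thesis by metis
qed

lemma rot_pow_A_rot_pow: "(rot ^^ k) (A ((rot ^^ k) y)) = A y"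
proof (induction k arbitrary: y)
  case (Suc k)
  have rA: "rot (A (rot z)) = A z" for z unfolding rot_def by (simp add: invA invB)
  have "(rot ^^ Suc k) (A ((rot ^^ Suc k) y)) = (rot ^^ k) (rot (A (rot ((rot ^^ k) y))))"
    by (simp add: funpow_swap1)
  also have "\<dots> = (rot ^^ k) (A ((rot ^^ k) y))" by (simp add: rA)
  finally show ?case using Suc by simp
qed simp

lemma rot_pow_inj_eq: "(rot ^^ k) a = (rot ^^ k) b \<longleftrightarrow> a = b"
  using inj_fn[OF inj_rot, of k] by (auto dest: injD)

lemma A_B_rot_pow:
  assumes "0 < n" "(rot ^^ n) x = x"
  shows "A (B ((rot ^^ k) x)) = (rot ^^ (n - 1 + k)) x"
proof -
  have "rot ((rot ^^ (n - 1 + k)) x) = (rot ^^ Suc (n - 1 + k)) x" by simp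
  also have "Suc (n - 1 + k) = k + n" using assms(1) by simp
  also have "(rot ^^ (k + n)) x = (rot ^^ k) x" using assms(2) by (simp add: funpow_add)
  also have "\<dots> = rot (A (B ((rot ^^ k) x)))" unfolding rot_def by (simp add: invA invB)
  finally show ?thesis by (simp add: inj_eq[OF inj_rot])
qed

lemma step_rel_rtrancl_sym: "(a,b) \<in> (step_rel A B)\<^sup>* \<Longrightarrow> (b,a) \<in> (step_rel A B)\<^sup>*"
proof (induction rule: rtrancl_induct)
  case (step y z)
  then have "(z, y) \<in> step_rel A B" using invA invB by (auto simp: step_rel_iff)
  then show ?case using step.IH by (meson converse_rtrancl_into_rtrancl)
qed simp

lemma reach_rot_pow: "(x, (rot ^^ k) x) \<in> (step_rel A B)\<^sup>*"
proof (induction k)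
  case (Suc k)
  let ?z = "(rot ^^ k) x"
  have "(?z, A ?z) \<in> step_rel A B" "(A ?z, B (A ?z)) \<in> step_rel A B" unfolding step_rel_def by auto
  hence "(?z, rot ?z) \<in> (step_rel A B)\<^sup>*" unfolding rot_def by auto
  with Suc have "(x, rot ?z) \<in> (step_rel A B)\<^sup>*" by (rule rtrancl_trans)
  thus ?case by simp
qed simp

lemma reach_A_rot_pow: "(x, A ((rot ^^ k) x)) \<in> (step_rel A B)\<^sup>*"
proof -
  have "((rot ^^ k) x, A ((rot ^^ k) x)) \<in> step_rel A B" unfolding step_rel_def by auto
  thus ?thesis using reach_rot_pow by (meson rtrancl.rtrancl_into_rtrancl)
qed

lemma reach_iff_rot_pow:
  assumes x: "x \<in> L"
  shows "(x, v) \<in> (step_rel A B)\<^sup>* \<longleftrightarrow> (\<exists>k. v = (rot ^^ k) x \<or> v = A ((rot ^^ k) x))"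
proof
  assume "\<exists>k. v = (rot ^^ k) x \<or> v = A ((rot ^^ k) x)"
  thus "(x, v) \<in> (step_rel A B)\<^sup>*" using reach_rot_pow reach_A_rot_pow by blast
next
  obtain n where n: "0 < n" "(rot ^^ n) x = x" using rot_periodic[OF x] by blast
  assume "(x, v) \<in> (step_rel A B)\<^sup>*"
  thus "\<exists>k. v = (rot ^^ k) x \<or> v = A ((rot ^^ k) x)"
  proof (induction rule: rtrancl_induct)
    case base show ?case by (rule exI[of _ 0]) simp
  next
    case (step y z)
    from step.IH obtain k where k: "y = (rot ^^ k) x \<or> y = A ((rot ^^ k) x)" by blast
    from step.hyps(2) consider "z = A y" | "z = B y" unfolding step_rel_iff by blast
    then show ?case
    proof cases
      case 1 thus ?thesis using k invA by metis
    next
      case 2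
      show ?thesis using k
      proof
        assume "y = (rot ^^ k) x"
        then have "z = A ((rot ^^ (n - 1 + k)) x)" using 2 A_B_rot_pow[OF n, of k] invA by metis
        then show ?thesis by blast
      next
        assume "y = A ((rot ^^ k) x)"
        then have "z = (rot ^^ Suc k) x" using 2 by (simp add: rot_def)
        then show ?thesis by blast
      qed
    qed
  qed
qed

definition period where "period x = (LEAST n. 0 < n \<and> (rot ^^ n) x = x)"

lemma period: "x \<in> L \<Longrightarrow> 0 < period x \<and> (rot ^^ period x) x = x"
  unfolding period_def using rot_periodic by (rule LeastI_ex)

lemma rot_pow_distinct:
  assumes "i < period x" "j < period x" "(rot ^^ i) x = (rot ^^ j) x"
  shows "i = j"
proof (rule ccontr)
  have min: "(rot ^^ m) x \<noteq> x" if "0 < m" "m < period x" for m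
    using that unfolding period_def using not_less_Least by blast
  { fix i j assume ij: "i < j" "j < period x" "(rot ^^ i) x = (rot ^^ j) x"
    have "(rot ^^ j) x = (rot ^^ i) ((rot ^^ (j - i)) x)"
      using ij(1) by (simp add: funpow_add[symmetric, THEN fun_cong, simplified comp_apply])
    hence "(rot ^^ (j - i)) x = x" using ij(3) rot_pow_inj_eq by metis
    moreover have "0 < j - i" "j - i < period x" using ij by auto
    ultimately have False using min by blast }
  moreover assume "i \<noteq> j"
  ultimately show False using assms by (metis linorder_neqE_nat)
qed

text \<open>The component of a point \<open>x\<close> with \<open>B x = x \<noteq> A x\<close> is the path
  \<open>x, A x, B (A x), \<dots>\<close> of \<open>period x\<close> points; its other end is the point halfway round.\<close>

context
  fixes x assumes xL: "x \<in> L" and Bx: "B x = x" and Ax: "A x \<noteq> x"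
begin

abbreviation "n \<equiv> period x"

lemma period_ge_2: "2 \<le> n"
proof (rule ccontr)
  assume "\<not> 2 \<le> n"
  hence "n = 1" using period[OF xL] by auto
  hence "rot x = x" using period[OF xL] by simp
  hence "A x = B x" using invB unfolding rot_def by (metis comp_apply)
  thus False using Bx Ax by simp
qed

lemma A_rot_pow_from_fixed: assumes "k < n" shows "A ((rot ^^ k) x) = (rot ^^ (n - 1 - k)) x"
proof -
  have pp: "0 < n" "(rot ^^ n) x = x" using period[OF xL] by auto
  have "A x = (rot ^^ (n - 1)) x" using A_B_rot_pow[OF pp, of 0] Bx by simp
  moreover have "(rot ^^ (n - 1)) x = (rot ^^ k) ((rot ^^ (n - 1 - k)) x)"
    using assms by (simp add: funpow_add[symmetric, THEN fun_cong, simplified comp_apply])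
  ultimately have "(rot ^^ k) (A ((rot ^^ k) x)) = (rot ^^ k) ((rot ^^ (n - 1 - k)) x)"
    using rot_pow_A_rot_pow by simp
  thus ?thesis using rot_pow_inj_eq by blast
qed

lemma B_rot_pow_from_fixed: assumes "k < n" shows "B ((rot ^^ k) x) = (rot ^^ (n - k)) x"
proof -
  have "B ((rot ^^ k) x) = rot (A ((rot ^^ k) x))" unfolding rot_def by (simp add: invA)
  also have "\<dots> = (rot ^^ Suc (n - 1 - k)) x" using A_rot_pow_from_fixed[OF assms] by simp
  also have "Suc (n - 1 - k) = n - k" using assms by simp
  finally show ?thesis .
qed

lemma reach_from_fixed_iff: "(x, v) \<in> (step_rel A B)\<^sup>* \<longleftrightarrow> (\<exists>k<n. v = (rot ^^ k) x)"
proof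
  assume "\<exists>k<n. v = (rot ^^ k) x" thus "(x, v) \<in> (step_rel A B)\<^sup>*" using reach_rot_pow by blast
next
  assume "(x, v) \<in> (step_rel A B)\<^sup>*"
  then obtain k where k: "v = (rot ^^ k) x \<or> v = A ((rot ^^ k) x)"
    using reach_iff_rot_pow[OF xL] by blast
  have pn: "0 < n" "(rot ^^ n) x = x" using period[OF xL] by auto
  have km: "(rot ^^ k) x = (rot ^^ (k mod n)) x" using funpow_mod_eq[OF pn(2), of k] by simp
  have kl: "k mod n < n" "n - 1 - k mod n < n" using pn by simp_all
  from k show "\<exists>k<n. v = (rot ^^ k) x"
  proof
    assume "v = (rot ^^ k) x" thus ?thesis using km kl by blast
  next
    assume "v = A ((rot ^^ k) x)" thus ?thesis using km kl A_rot_pow_from_fixed[OF kl(1)] by auto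
  qed
qed

definition other_end where "other_end = (rot ^^ (n div 2)) x"

lemma other_end_neq: "other_end \<noteq> x"
proof
  have h: "n div 2 < n" "0 < n div 2" "0 < n" using period_ge_2 by auto
  assume "other_end = x"
  then have "(rot ^^ (n div 2)) x = (rot ^^ 0) x" unfolding other_end_def by simp
  from rot_pow_distinct[OF h(1) h(3) this] h(2) show False by simp
qed

lemma reach_other_end: "(x, other_end) \<in> (step_rel A B)\<^sup>*"
  unfolding other_end_def using reach_rot_pow .

lemma A_other_end_iff: "A other_end = other_end \<longleftrightarrow> odd n"
proof -
  have h: "n div 2 < n" "n - 1 - n div 2 < n" using period_ge_2 by auto
  have "A other_end = other_end \<longleftrightarrow> n - 1 - n div 2 = n div 2"
    using rot_pow_distinct[OF h(2) h(1)] A_rot_pow_from_fixed[OF h(1)] unfolding other_end_def by auto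
  also have "\<dots> \<longleftrightarrow> odd n" using period_ge_2 half_reflect_fixed_iff_odd by simp
  finally show ?thesis .
qed

lemma B_other_end_iff: "B other_end = other_end \<longleftrightarrow> even n"
proof -
  have h: "n div 2 < n" "n - n div 2 < n" using period_ge_2 by auto
  have "B other_end = other_end \<longleftrightarrow> n - n div 2 = n div 2"
    using rot_pow_distinct[OF h(2) h(1)] B_rot_pow_from_fixed[OF h(1)] unfolding other_end_def by auto
  also have "\<dots> \<longleftrightarrow> even n" by (rule half_reflect'_fixed_iff_even)
  finally show ?thesis .
qed

lemma fixed_points_from_fixed:
  "{v. (x, v) \<in> (step_rel A B)\<^sup>* \<and> (A v = v \<or> B v = v)} = {x, other_end}"
proof (intro set_eqI iffI)
  fix v assume "v \<in> {v. (x, v) \<in> (step_rel A B)\<^sup>* \<and> (A v = v \<or> B v = v)}"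
  then obtain k where k: "k < n" "v = (rot ^^ k) x" and f: "A v = v \<or> B v = v"
    using reach_from_fixed_iff by blast
  have "k = 0 \<or> k = n div 2"
  proof (cases "A v = v")
    case True
    hence "(rot ^^ (n - 1 - k)) x = (rot ^^ k) x" using A_rot_pow_from_fixed[OF k(1)] k(2) by simp
    moreover have "n - 1 - k < n" using k(1) by simp
    ultimately have "n - 1 - k = k" using rot_pow_distinct k(1) by blast
    thus ?thesis using reflect_fixed_eq_half k(1) by blast
  next
    case False
    hence "(rot ^^ (n - k)) x = (rot ^^ k) x" using f B_rot_pow_from_fixed[OF k(1)] k(2) by simp
    moreover have "n - k < n" if "k \<noteq> 0" using that k(1) by simp
    ultimately show ?thesis using rot_pow_distinct[OF _ k(1)] reflect'_fixed_eq_half k(1) by blast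
  qed
  thus "v \<in> {x, other_end}" using k(2) unfolding other_end_def by auto
next
  fix v assume "v \<in> {x, other_end}"
  thus "v \<in> {v. (x, v) \<in> (step_rel A B)\<^sup>* \<and> (A v = v \<or> B v = v)}"
    using reach_other_end Bx A_other_end_iff B_other_end_iff by auto
qed

text \<open>Colouring the second half of the path gives a proper 2-colouring of the component.\<close>

definition far_half where "far_half v = (\<exists>k. (n - 1) div 2 < k \<and> k < n \<and> v = (rot ^^ k) x)"

lemma far_half_rot_pow: "j < n \<Longrightarrow> far_half ((rot ^^ j) x) \<longleftrightarrow> (n - 1) div 2 < j"
  unfolding far_half_def using rot_pow_distinct by blast

lemma far_half_proper:
  assumes "(x, v) \<in> (step_rel A B)\<^sup>*"
  shows "A v \<noteq> v \<Longrightarrow> far_half (A v) \<noteq> far_half v"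
    and "B v \<noteq> v \<Longrightarrow> far_half (B v) \<noteq> far_half v"
proof -
  obtain k where k: "k < n" "v = (rot ^^ k) x" using assms reach_from_fixed_iff by blast
  have fv: "far_half v = ((n - 1) div 2 < k)" using far_half_rot_pow[OF k(1)] k(2) by simp
  { assume "A v \<noteq> v"
    then have "n - 1 - k \<noteq> k" using A_rot_pow_from_fixed[OF k(1)] k(2) by auto
    moreover have "n - 1 - k < n" using k(1) by simp
    then have "far_half (A v) = ((n - 1) div 2 < n - 1 - k)"
      using A_rot_pow_from_fixed[OF k(1)] k far_half_rot_pow[of "n - 1 - k"] by simp
    ultimately show "far_half (A v) \<noteq> far_half v" using fv reflect_crosses_half[OF k(1)] by simp }
  { assume Bv: "B v \<noteq> v"
    then have k0: "k \<noteq> 0" using k(2) Bx by (metis funpow_0)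
    then have "n - k \<noteq> k" using B_rot_pow_from_fixed[OF k(1)] k(2) Bv by auto
    moreover have "n - k < n" using k0 k(1) by simp
    then have "far_half (B v) = ((n - 1) div 2 < n - k)"
      using B_rot_pow_from_fixed[OF k(1)] k k0 far_half_rot_pow[of "n - k"] by simp
    ultimately show "far_half (B v) \<noteq> far_half v"
      using fv reflect'_crosses_half[OF k(1)] k0 by simp }
qed

lemma far_half_ends: "far_half other_end \<noteq> far_half x \<longleftrightarrow> B other_end = other_end"
proof -
  have "\<not> far_half x" using far_half_rot_pow[of 0] period[OF xL] by simp
  moreover have "n div 2 < n" "0 < n" using period_ge_2 by auto
  then have "far_half other_end \<longleftrightarrow> even n"
    using far_half_rot_pow[of "n div 2"] half_lt_half_iff_even unfolding other_end_def by simp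
  ultimately show ?thesis using B_other_end_iff by simp
qed

end

lemma fixed_point_component:
  assumes "x \<in> L" "B x = x" "A x \<noteq> x"
  obtains y and w :: "'a \<Rightarrow> bool" where "y \<noteq> x" "(x, y) \<in> (step_rel A B)\<^sup>*"
    "{v. (x, v) \<in> (step_rel A B)\<^sup>* \<and> (A v = v \<or> B v = v)} = {x, y}"
    "\<And>v. (x, v) \<in> (step_rel A B)\<^sup>* \<Longrightarrow> A v \<noteq> v \<Longrightarrow> w (A v) \<noteq> w v"
    "\<And>v. (x, v) \<in> (step_rel A B)\<^sup>* \<Longrightarrow> B v \<noteq> v \<Longrightarrow> w (B v) \<noteq> w v"
    "w y \<noteq> w x \<longleftrightarrow> B y = y"
  by (rule that[OF other_end_neq[OF assms] reach_other_end[OF assms] fixed_points_from_fixed[OF assms]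
      far_half_proper(1)[OF assms] far_half_proper(2)[OF assms] far_half_ends[OF assms]])

text \<open>A component without fixed points is a cycle of even length, 2-coloured by
  membership in the \<open>A\<close>-image of the \<open>rot\<close>-orbit.\<close>

lemma rot_orbit_disjoint_A_image:
  assumes nf: "\<forall>v. (x, v) \<in> (step_rel A B)\<^sup>* \<longrightarrow> A v \<noteq> v \<and> B v \<noteq> v"
  shows "(rot ^^ j) x \<noteq> A ((rot ^^ k) x)"
proof
  assume e: "(rot ^^ j) x = A ((rot ^^ k) x)"
  have "(rot ^^ (k + j)) x = (rot ^^ k) (A ((rot ^^ k) x))" using e by (simp add: funpow_add)
  hence e2: "(rot ^^ (k + j)) x = A x" using rot_pow_A_rot_pow by simp
  define c where "c = (k + j) div 2"
  show False
  proof (cases "even (k + j)")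
    case True
    hence "k + j = c + c" unfolding c_def by presburger
    hence "(rot ^^ (k + j)) x = (rot ^^ c) ((rot ^^ c) x)" by (simp only: funpow_add comp_apply)
    hence "(rot ^^ c) ((rot ^^ c) x) = (rot ^^ c) (A ((rot ^^ c) x))"
      using e2 rot_pow_A_rot_pow by simp
    hence "A ((rot ^^ c) x) = (rot ^^ c) x" using rot_pow_inj_eq by simp
    thus False using nf reach_rot_pow by blast
  next
    case False
    hence "k + j = c + Suc c" unfolding c_def by presburger
    hence "(rot ^^ (k + j)) x = (rot ^^ c) ((rot ^^ Suc c) x)" by (simp only: funpow_add comp_apply)
    hence "(rot ^^ c) ((rot ^^ Suc c) x) = (rot ^^ c) (A ((rot ^^ c) x))"
      using e2 rot_pow_A_rot_pow by simp
    hence "(rot ^^ Suc c) x = A ((rot ^^ c) x)" using rot_pow_inj_eq by simp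
    hence "B (A ((rot ^^ c) x)) = A ((rot ^^ c) x)" by (simp add: rot_def)
    thus False using nf reach_A_rot_pow by blast
  qed
qed

lemma cycle_component_colouring:
  assumes xL: "x \<in> L" and nf: "\<forall>v. (x, v) \<in> (step_rel A B)\<^sup>* \<longrightarrow> A v \<noteq> v \<and> B v \<noteq> v"
  shows "\<exists>w::'a\<Rightarrow>bool. \<forall>v. (x, v) \<in> (step_rel A B)\<^sup>* \<longrightarrow> w (A v) \<noteq> w v \<and> w (B v) \<noteq> w v"
proof -
  obtain n where n: "0 < n" "(rot ^^ n) x = x" using rot_periodic[OF xL] by blast
  note disj = rot_orbit_disjoint_A_image[OF nf]
  define w where "w v = (\<exists>k. v = A ((rot ^^ k) x))" for v
  have "w (A v) \<noteq> w v \<and> w (B v) \<noteq> w v" if xv: "(x, v) \<in> (step_rel A B)\<^sup>*" for v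
  proof -
    obtain k where k: "v = (rot ^^ k) x \<or> v = A ((rot ^^ k) x)"
      using xv unfolding reach_iff_rot_pow[OF xL] by blast
    then show ?thesis
    proof
      assume v: "v = (rot ^^ k) x"
      have "A (B v) = (rot ^^ (n - 1 + k)) x" using A_B_rot_pow[OF n, of k] v by simp
      then have "B v = A ((rot ^^ (n - 1 + k)) x)" using invA by (metis)
      then have "w (A v)" "w (B v)" unfolding w_def using v by auto
      moreover have "\<not> w v" unfolding w_def using v disj by auto
      ultimately show ?thesis by blast
    next
      assume v: "v = A ((rot ^^ k) x)"
      have "B v = (rot ^^ Suc k) x" using v by (simp add: rot_def)
      have "\<not> w (B v)"
      proof
        assume "w (B v)" then obtain j where "B v = A ((rot ^^ j) x)" unfolding w_def by blast
        thus False using \<open>B v = (rot ^^ Suc k) x\<close> disj[of "Suc k" j] by simp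
      qed
      moreover have "\<not> w (A v)"
      proof
        assume "w (A v)" then obtain j where "A v = A ((rot ^^ j) x)" unfolding w_def by blast
        hence "(rot ^^ k) x = A ((rot ^^ j) x)" using v invA by simp
        thus False using disj[of k j] by simp
      qed
      moreover have "w v" unfolding w_def using v by auto
      ultimately show ?thesis by blast
    qed
  qed
  then show ?thesis by blast
qed

end

section \<open>Stacking two diagrams\<close>

text \<open>Stacking \<open>b1\<close> on \<open>b2\<close> produces a graph on the three rows of vertices \<open>Top\<close>, \<open>Mid\<close>,
  \<open>Bot\<close>; its edges are those of the involutions \<open>upper d b1\<close> (moving \<open>Top\<close>/\<open>Mid\<close>
  along \<open>b1\<close>) and \<open>lower d b2\<close> (moving \<open>Mid\<close>/\<open>Bot\<close> along \<open>b2\<close>).\<close>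

definition upper :: "nat \<Rightarrow> diag \<Rightarrow> lvl \<Rightarrow> lvl" where
 "upper d b v = (case v of Top i \<Rightarrow> if i < d then up_v (partner b (Inl i)) else v
            | Mid j \<Rightarrow> if j < d then up_v (partner b (Inr j)) else v | Bot k \<Rightarrow> v)"

definition lower :: "nat \<Rightarrow> diag \<Rightarrow> lvl \<Rightarrow> lvl" where
 "lower d b v = (case v of Top i \<Rightarrow> v | Mid j \<Rightarrow> if j < d then lo_v (partner b (Inl j)) else v
            | Bot k \<Rightarrow> if k < d then lo_v (partner b (Inr k)) else v)"

definition levels :: "nat \<Rightarrow> lvl set" where
  "levels d = {Top i|i. i<d} \<union> {Mid i|i. i<d} \<union> {Bot i|i. i<d}"

definition outer :: "lvl \<Rightarrow> bool" where
  "outer v = (case v of Mid _ \<Rightarrow> False | _ \<Rightarrow> True)"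

definition is_top :: "lvl \<Rightarrow> bool" where
  "is_top v = (case v of Top _ \<Rightarrow> True | _ \<Rightarrow> False)"

lemma finite_levels: "finite (levels d)"
  unfolding levels_def by auto

lemma Mid_levels: "j < d \<Longrightarrow> Mid j \<in> levels d"
  unfolding levels_def by auto

lemma up_v_inj: "up_v x = up_v y \<longleftrightarrow> x = y"
  unfolding up_v_def by (cases x; cases y) auto

lemma lo_v_inj: "lo_v x = lo_v y \<longleftrightarrow> x = y"
  unfolding lo_v_def by (cases x; cases y) auto

lemma outer_v_inj: "outer_v x = outer_v y \<longleftrightarrow> x = y"
  unfolding outer_v_def by (cases x; cases y) auto

lemma outer_outer_v: "outer (outer_v x)"
  unfolding outer_def outer_v_def by (cases x) auto

lemma up_v_levels: "x \<in> verts d \<Longrightarrow> up_v x \<in> levels d"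
  unfolding up_v_def levels_def by (cases x) (auto simp: verts_iff)

lemma lo_v_levels: "x \<in> verts d \<Longrightarrow> lo_v x \<in> levels d"
  unfolding lo_v_def levels_def by (cases x) (auto simp: verts_iff)

lemma outer_v_levels: "x \<in> verts d \<Longrightarrow> outer_v x \<in> levels d"
  unfolding outer_v_def levels_def by (cases x) (auto simp: verts_iff)

lemma outer_levels_ex: "v \<in> levels d \<Longrightarrow> outer v \<Longrightarrow> \<exists>x\<in>verts d. v = outer_v x"
  unfolding levels_def outer_def
  by (auto simp: outer_v_def verts_iff intro: bexI[of _ "Inl _"] bexI[of _ "Inr _"])

lemma up_v_image_iff: "v \<in> up_v ` verts d \<longleftrightarrow> (\<exists>i<d. v = Top i \<or> v = Mid i)"
  by (auto simp: up_v_def verts_iff image_iff split: sum.splits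
      intro: bexI[of _ "Inl _"] bexI[of _ "Inr _"])

lemma lo_v_image_iff: "v \<in> lo_v ` verts d \<longleftrightarrow> (\<exists>i<d. v = Mid i \<or> v = Bot i)"
  by (auto simp: lo_v_def verts_iff image_iff split: sum.splits
      intro: bexI[of _ "Inl _"] bexI[of _ "Inr _"])

lemma levels_cases:
  "v \<in> levels d \<Longrightarrow>
     (v \<in> up_v ` verts d \<and> v \<in> lo_v ` verts d \<and> \<not> is_top v \<and> \<not> outer v)
   \<or> (v \<in> up_v ` verts d \<and> v \<notin> lo_v ` verts d \<and> is_top v \<and> outer v)
   \<or> (v \<notin> up_v ` verts d \<and> v \<in> lo_v ` verts d \<and> \<not> is_top v \<and> outer v)"
  unfolding levels_def up_v_image_iff lo_v_image_iff is_top_def outer_def by auto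

lemma upper_up_v: "x \<in> verts d \<Longrightarrow> upper d b (up_v x) = up_v (partner b x)"
  unfolding upper_def up_v_def by (cases x) (auto simp: verts_iff)

lemma lower_lo_v: "x \<in> verts d \<Longrightarrow> lower d b (lo_v x) = lo_v (partner b x)"
  unfolding lower_def lo_v_def by (cases x) (auto simp: verts_iff)

lemma upper_fixed: "v \<notin> up_v ` verts d \<Longrightarrow> upper d b v = v"
  unfolding up_v_image_iff upper_def by (cases v) auto

lemma lower_fixed: "v \<notin> lo_v ` verts d \<Longrightarrow> lower d b v = v"
  unfolding lo_v_image_iff lower_def by (cases v) auto

lemma upper_upper: "b \<in> gen_brauer d \<Longrightarrow> upper d b (upper d b v) = v"
  by (cases "v \<in> up_v ` verts d")
     (auto simp: upper_up_v upper_fixed partner_in_verts partner_partner)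

lemma lower_lower: "b \<in> gen_brauer d \<Longrightarrow> lower d b (lower d b v) = v"
  by (cases "v \<in> lo_v ` verts d")
     (auto simp: lower_lo_v lower_fixed partner_in_verts partner_partner)

lemma upper_levels: "b \<in> gen_brauer d \<Longrightarrow> v \<in> levels d \<Longrightarrow> upper d b v \<in> levels d"
  by (cases "v \<in> up_v ` verts d") (auto simp: upper_up_v upper_fixed partner_in_verts up_v_levels)

lemma lower_levels: "b \<in> gen_brauer d \<Longrightarrow> v \<in> levels d \<Longrightarrow> lower d b v \<in> levels d"
  by (cases "v \<in> lo_v ` verts d") (auto simp: lower_lo_v lower_fixed partner_in_verts lo_v_levels)

lemma upper_moves: "b \<in> brauer d \<Longrightarrow> v \<in> up_v ` verts d \<Longrightarrow> upper d b v \<noteq> v"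
  using partner_neq by (auto simp: upper_up_v up_v_inj)

lemma lower_moves: "b \<in> brauer d \<Longrightarrow> v \<in> lo_v ` verts d \<Longrightarrow> lower d b v \<noteq> v"
  using partner_neq by (auto simp: lower_lo_v lo_v_inj)

lemma upper_moved_levels:
  assumes "upper d b v \<noteq> v" shows "v \<in> levels d"
proof -
  have "v \<in> up_v ` verts d" using assms upper_fixed by blast
  then show ?thesis using up_v_levels by blast
qed

lemma lower_moved_levels:
  assumes "lower d b v \<noteq> v" shows "v \<in> levels d"
proof -
  have "v \<in> lo_v ` verts d" using assms lower_fixed by blast
  then show ?thesis using lo_v_levels by blast
qed

lemma involution_pair_upper_lower:
  assumes "b1 \<in> gen_brauer d" "b2 \<in> gen_brauer d"
  shows "involution_pair (upper d b1) (lower d b2) (levels d)"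
    and "involution_pair (lower d b2) (upper d b1) (levels d)"
  using assms by (unfold_locales; simp add: upper_upper lower_lower upper_levels lower_levels finite_levels)+

lemma stack_rel_upperI: "B \<in> c1 \<Longrightarrow> x \<in> B \<Longrightarrow> y \<in> B \<Longrightarrow> (up_v x, up_v y) \<in> stack_rel c1 c2"
  unfolding stack_rel_def by blast

lemma stack_rel_lowerI: "B \<in> c2 \<Longrightarrow> x \<in> B \<Longrightarrow> y \<in> B \<Longrightarrow> (lo_v x, lo_v y) \<in> stack_rel c1 c2"
  unfolding stack_rel_def by blast

lemma stack_rel_step:
  assumes c1: "c1 \<in> gen_brauer d" and c2: "c2 \<in> gen_brauer d" and p: "(a, c) \<in> stack_rel c1 c2"
  shows "c = a \<or> c = upper d c1 a \<or> c = lower d c2 a"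
proof -
  from p consider (u) x y B where "a = up_v x" "c = up_v y" "B \<in> c1" "x \<in> B" "y \<in> B"
    | (l) x y B where "a = lo_v x" "c = lo_v y" "B \<in> c2" "x \<in> B" "y \<in> B"
    unfolding stack_rel_def by blast
  then show ?thesis
  proof cases
    case u
    then have x: "x \<in> verts d" using gen_brauer_block_subset[OF c1] by blast
    have "y = x \<or> y = partner c1 x" using block_eq_partner[OF c1 x u(3,4)] u(5) by blast
    then show ?thesis using u upper_up_v[OF x] by auto
  next
    case l
    then have x: "x \<in> verts d" using gen_brauer_block_subset[OF c2] by blast
    have "y = x \<or> y = partner c2 x" using block_eq_partner[OF c2 x l(3,4)] l(5) by blast
    then show ?thesis using l lower_lo_v[OF x] by auto
  qed
qed

lemma step_stack_rel:
  assumes c1: "c1 \<in> gen_brauer d" and c2: "c2 \<in> gen_brauer d"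
  shows "(a, upper d c1 a) \<in> (stack_rel c1 c2)\<^sup>=" and "(a, lower d c2 a) \<in> (stack_rel c1 c2)\<^sup>="
proof -
  show "(a, upper d c1 a) \<in> (stack_rel c1 c2)\<^sup>="
  proof (cases "a \<in> up_v ` verts d")
    case True
    then obtain x where x: "x \<in> verts d" "a = up_v x" by blast
    then show ?thesis
      using stack_rel_upperI[OF partner_block[OF c1 x(1)]] upper_up_v[OF x(1)] by simp
  qed (simp add: upper_fixed)
  show "(a, lower d c2 a) \<in> (stack_rel c1 c2)\<^sup>="
  proof (cases "a \<in> lo_v ` verts d")
    case True
    then obtain x where x: "x \<in> verts d" "a = lo_v x" by blast
    then show ?thesis
      using stack_rel_lowerI[OF partner_block[OF c2 x(1)]] lower_lo_v[OF x(1)] by simp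
  qed (simp add: lower_fixed)
qed

lemma stack_rel_rtrancl_eq:
  assumes c1: "c1 \<in> gen_brauer d" and c2: "c2 \<in> gen_brauer d"
  shows "(stack_rel c1 c2)\<^sup>* = (step_rel (upper d c1) (lower d c2))\<^sup>*"
proof -
  have "(a, c) \<in> (stack_rel c1 c2)\<^sup>= \<longleftrightarrow> (a, c) \<in> (step_rel (upper d c1) (lower d c2))\<^sup>=" for a c
  proof
    assume "(a, c) \<in> (stack_rel c1 c2)\<^sup>="
    then show "(a, c) \<in> (step_rel (upper d c1) (lower d c2))\<^sup>="
      using stack_rel_step[OF c1 c2, of a c] by (auto simp: step_rel_iff)
  next
    assume "(a, c) \<in> (step_rel (upper d c1) (lower d c2))\<^sup>="
    then consider "c = a" | "c = upper d c1 a" | "c = lower d c2 a" by (auto simp: step_rel_iff)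
    then show "(a, c) \<in> (stack_rel c1 c2)\<^sup>=" using step_stack_rel[OF c1 c2, of a] by cases auto
  qed
  then have "(stack_rel c1 c2)\<^sup>= = (step_rel (upper d c1) (lower d c2))\<^sup>="
    by (auto simp: split_paired_all)
  then show ?thesis by (metis rtrancl_reflcl)
qed

abbreviation conn :: "nat \<Rightarrow> diag \<Rightarrow> diag \<Rightarrow> (lvl \<times> lvl) set" where
  "conn d b1 b2 \<equiv> step_rel (upper d b1) (lower d b2)"

context
  fixes d :: nat and b1 b2 :: diag
  assumes b1: "b1 \<in> brauer d" and b2: "b2 \<in> brauer d"
begin

lemma ip_upper_lower: "involution_pair (upper d b1) (lower d b2) (levels d)"
  and ip_lower_upper: "involution_pair (lower d b2) (upper d b1) (levels d)"
  using involution_pair_upper_lower[OF brauer_gen_brauer[OF b1] brauer_gen_brauer[OF b2]] by blast+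

lemma conn_sym: "(a, c) \<in> (conn d b1 b2)\<^sup>* \<Longrightarrow> (c, a) \<in> (conn d b1 b2)\<^sup>*"
  using involution_pair.step_rel_rtrancl_sym[OF ip_upper_lower] .

lemma conn_trans_iff: "(v, e) \<in> (conn d b1 b2)\<^sup>* \<Longrightarrow> (e, z) \<in> (conn d b1 b2)\<^sup>* \<longleftrightarrow> (v, z) \<in> (conn d b1 b2)\<^sup>*"
  using conn_sym by (meson rtrancl_trans)

lemma conn_levels: assumes "(a, c) \<in> (conn d b1 b2)\<^sup>*" "a \<in> levels d" shows "c \<in> levels d"
  using assms
proof (induction rule: rtrancl_induct)
  case (step y z)
  then show ?case using upper_levels[OF brauer_gen_brauer[OF b1]] lower_levels[OF brauer_gen_brauer[OF b2]]
    by (auto simp: step_rel_iff)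
qed

lemma lower_fixed_iff: "z \<in> levels d \<Longrightarrow> lower d b2 z = z \<longleftrightarrow> is_top z"
  using levels_cases[of z d] lower_moves[OF b2] lower_fixed by blast

lemma upper_fixed_iff: "z \<in> levels d \<Longrightarrow> upper d b1 z = z \<longleftrightarrow> outer z \<and> \<not> is_top z"
  using levels_cases[of z d] upper_moves[OF b1] upper_fixed by blast

lemma outer_iff_fixed: "z \<in> levels d \<Longrightarrow> outer z \<longleftrightarrow> upper d b1 z = z \<or> lower d b2 z = z"
  using upper_fixed_iff lower_fixed_iff levels_cases[of z d] by blast

definition proper_col :: "lvl \<Rightarrow> (lvl \<Rightarrow> bool) \<Rightarrow> bool" where
  "proper_col v w \<longleftrightarrow> (\<forall>z. (v, z) \<in> (conn d b1 b2)\<^sup>* \<longrightarrow>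
     (upper d b1 z \<noteq> z \<longrightarrow> w (upper d b1 z) \<noteq> w z) \<and> (lower d b2 z \<noteq> z \<longrightarrow> w (lower d b2 z) \<noteq> w z))"

definition end_parity :: "lvl \<Rightarrow> (lvl \<Rightarrow> bool) \<Rightarrow> bool" where
  "end_parity v w \<longleftrightarrow> (\<forall>y z. (v, y) \<in> (conn d b1 b2)\<^sup>* \<longrightarrow> (v, z) \<in> (conn d b1 b2)\<^sup>* \<longrightarrow> outer y \<longrightarrow> outer z \<longrightarrow> y \<noteq> z
     \<longrightarrow> (w y \<noteq> w z \<longleftrightarrow> (is_top y \<longleftrightarrow> is_top z)))"

text \<open>A component containing an outer vertex is a path between two outer vertices; along it
  the colour changes at every step, so the end colours differ exactly when the path has odd
  length, i.e. when its ends lie in the same outer row.\<close>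

lemma outer_component:
  assumes e: "e \<in> levels d" "outer e"
  shows "\<exists>y w. y \<noteq> e \<and> (e, y) \<in> (conn d b1 b2)\<^sup>*
    \<and> (\<forall>z. (e, z) \<in> (conn d b1 b2)\<^sup>* \<and> outer z \<longleftrightarrow> z = e \<or> z = y)
    \<and> proper_col e w \<and> (w y \<noteq> w e \<longleftrightarrow> (is_top y \<longleftrightarrow> is_top e))"
proof -
  let ?F = "{z. (e, z) \<in> (conn d b1 b2)\<^sup>* \<and> (upper d b1 z = z \<or> lower d b2 z = z)}"
  obtain y w where y: "y \<noteq> e" "(e, y) \<in> (conn d b1 b2)\<^sup>*" "?F = {e, y}"
    and pw: "proper_col e w" and wy: "w y \<noteq> w e \<longleftrightarrow> (is_top y \<longleftrightarrow> is_top e)"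
  proof (cases "is_top e")
    case True
    then have fx: "lower d b2 e = e" "upper d b1 e \<noteq> e" using lower_fixed_iff upper_fixed_iff e by auto
    obtain y and w :: "lvl \<Rightarrow> bool" where y: "y \<noteq> e" "(e, y) \<in> (conn d b1 b2)\<^sup>*" "?F = {e, y}"
      and pA: "\<And>z. (e, z) \<in> (conn d b1 b2)\<^sup>* \<Longrightarrow> upper d b1 z \<noteq> z \<Longrightarrow> w (upper d b1 z) \<noteq> w z"
      and pB: "\<And>z. (e, z) \<in> (conn d b1 b2)\<^sup>* \<Longrightarrow> lower d b2 z \<noteq> z \<Longrightarrow> w (lower d b2 z) \<noteq> w z"
      and wy: "w y \<noteq> w e \<longleftrightarrow> lower d b2 y = y"
      by (rule involution_pair.fixed_point_component[OF ip_upper_lower e(1) fx]) blast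
    have "proper_col e w" unfolding proper_col_def using pA pB by blast
    moreover have "lower d b2 y = y \<longleftrightarrow> (is_top y \<longleftrightarrow> is_top e)"
      using lower_fixed_iff[OF conn_levels[OF y(2) e(1)]] True by simp
    ultimately show ?thesis using that y wy by blast
  next
    case False
    then have fx: "upper d b1 e = e" "lower d b2 e \<noteq> e" using lower_fixed_iff upper_fixed_iff e by auto
    obtain y and w :: "lvl \<Rightarrow> bool" where y: "y \<noteq> e" "(e, y) \<in> (step_rel (lower d b2) (upper d b1))\<^sup>*"
        "{z. (e, z) \<in> (step_rel (lower d b2) (upper d b1))\<^sup>* \<and> (lower d b2 z = z \<or> upper d b1 z = z)} = {e, y}"
      and pB: "\<And>z. (e, z) \<in> (step_rel (lower d b2) (upper d b1))\<^sup>* \<Longrightarrow> lower d b2 z \<noteq> z \<Longrightarrow> w (lower d b2 z) \<noteq> w z"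
      and pA: "\<And>z. (e, z) \<in> (step_rel (lower d b2) (upper d b1))\<^sup>* \<Longrightarrow> upper d b1 z \<noteq> z \<Longrightarrow> w (upper d b1 z) \<noteq> w z"
      and wy: "w y \<noteq> w e \<longleftrightarrow> upper d b1 y = y"
      by (rule involution_pair.fixed_point_component[OF ip_lower_upper e(1) fx]) blast
    note y = y[unfolded step_rel_commute[of "lower d b2"]]
    have F: "?F = {e, y}" using y(3) by (simp only: disj_commute)
    have "proper_col e w"
      unfolding proper_col_def using pA pB unfolding step_rel_commute[of "lower d b2"] by blast
    moreover have yL: "y \<in> levels d" using conn_levels[OF y(2) e(1)] .
    then have "outer y" using outer_iff_fixed[OF yL] F by blast
    then have "upper d b1 y = y \<longleftrightarrow> (is_top y \<longleftrightarrow> is_top e)"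
      using upper_fixed_iff[OF yL] False by simp
    ultimately show ?thesis using that y(1,2) F wy by blast
  qed
  moreover have "(e, z) \<in> (conn d b1 b2)\<^sup>* \<and> outer z \<longleftrightarrow> z = e \<or> z = y" for z
  proof -
    have "(e, z) \<in> (conn d b1 b2)\<^sup>* \<and> outer z \<longleftrightarrow> z \<in> ?F"
      using outer_iff_fixed conn_levels[OF _ e(1)] by blast
    then show ?thesis using y(3) by simp
  qed
  ultimately show ?thesis by blast
qed

lemma colouring_exists:
  assumes v: "v \<in> levels d"
  shows "\<exists>w. proper_col v w \<and> end_parity v w"
proof (cases "\<exists>e. (v, e) \<in> (conn d b1 b2)\<^sup>* \<and> outer e")
  case True
  then obtain e where ve: "(v, e) \<in> (conn d b1 b2)\<^sup>*" "outer e" by blast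
  have eL: "e \<in> levels d" using conn_levels[OF ve(1) v] .
  obtain y w where y: "(e, y) \<in> (conn d b1 b2)\<^sup>*" "\<And>z. (e, z) \<in> (conn d b1 b2)\<^sup>* \<and> outer z \<longleftrightarrow> z = e \<or> z = y"
    and pw: "proper_col e w" and wy: "w y \<noteq> w e \<longleftrightarrow> (is_top y \<longleftrightarrow> is_top e)"
    using outer_component[OF eL ve(2)] by blast
  have "proper_col v w" using pw conn_trans_iff[OF ve(1)] unfolding proper_col_def by blast
  moreover have "end_parity v w" unfolding end_parity_def
  proof (intro allI impI)
    fix p r assume "(v, p) \<in> (conn d b1 b2)\<^sup>*" "(v, r) \<in> (conn d b1 b2)\<^sup>*" "outer p" "outer r"
      and pr: "p \<noteq> r"
    then have "p = e \<or> p = y" "r = e \<or> r = y" using y(2) conn_trans_iff[OF ve(1)] by blast+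
    with pr show "(w p \<noteq> w r) = (is_top p = is_top r)" using wy by auto
  qed
  ultimately show ?thesis by blast
next
  case False
  then have "\<forall>z. (v, z) \<in> (conn d b1 b2)\<^sup>* \<longrightarrow> upper d b1 z \<noteq> z \<and> lower d b2 z \<noteq> z"
    using outer_iff_fixed conn_levels v by blast
  from involution_pair.cycle_component_colouring[OF ip_upper_lower v this] obtain w :: "lvl \<Rightarrow> bool"
    where "\<forall>z. (v, z) \<in> (conn d b1 b2)\<^sup>* \<longrightarrow> w (upper d b1 z) \<noteq> w z \<and> w (lower d b2 z) \<noteq> w z" by blast
  then have "proper_col v w" unfolding proper_col_def by blast
  moreover have "end_parity v w" unfolding end_parity_def using False by blast
  ultimately show ?thesis by blast
qed

end

section \<open>Labellings of the stacked graph\<close>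

text \<open>Orientations \<open>u\<close>, \<open>t\<close>, \<open>s\<close> of the three rows label the vertices of the stacked graph.
  \<open>ldir l v\<close> is the analogue of \<open>outgoing\<close>; on the middle row it records the direction
  as seen from the lower diagram.\<close>

definition level_label :: "ori list \<Rightarrow> ori list \<Rightarrow> ori list \<Rightarrow> lvl \<Rightarrow> ori" where
  "level_label u t s v = (case v of Top i \<Rightarrow> u!i | Mid j \<Rightarrow> t!j | Bot k \<Rightarrow> s!k)"

definition ldir :: "(lvl \<Rightarrow> ori) \<Rightarrow> lvl \<Rightarrow> bool" where
  "ldir l v = ((l v = Up) = (\<not> outer v))"

lemma vlabel_up: "vlabel u t x = level_label u t s (up_v x)"
  unfolding vlabel_def level_label_def up_v_def by (cases x) auto

lemma vlabel_lo: "vlabel t s x = level_label u t s (lo_v x)"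
  unfolding vlabel_def level_label_def lo_v_def by (cases x) auto

lemma vlabel_outer: "vlabel u s x = level_label u t s (outer_v x)"
  unfolding vlabel_def level_label_def outer_v_def by (cases x) auto

lemma outgoing_up: "outgoing u t x = (\<not> ldir (level_label u t s) (up_v x))"
  unfolding outgoing_def ldir_def vlabel_up[of u t x s] by (cases x) (auto simp: up_v_def outer_def)

lemma outgoing_lo: "outgoing t s x = ldir (level_label u t s) (lo_v x)"
  unfolding outgoing_def ldir_def vlabel_lo[of t s x u] by (cases x) (auto simp: lo_v_def outer_def)

lemma outgoing_outer: "outgoing u s x = (ldir (level_label u t s) (outer_v x) \<noteq> is_top (outer_v x))"
  unfolding outgoing_def ldir_def vlabel_outer[of u s x t]
  by (cases x) (auto simp: outer_v_def outer_def is_top_def)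

lemma level_label_outer: "outer v \<Longrightarrow> level_label u t s v = level_label u t' s v"
  unfolding level_label_def outer_def by (cases v) auto

lemma ldir_inj: "l v \<noteq> Circ \<Longrightarrow> l' v \<noteq> Circ \<Longrightarrow> ldir l v = ldir l' v \<Longrightarrow> l v = l' v"
  unfolding ldir_def by (cases "l v"; cases "l' v") auto

definition compatible_at :: "(lvl \<Rightarrow> lvl) \<Rightarrow> (lvl \<Rightarrow> ori) \<Rightarrow> lvl \<Rightarrow> bool" where
  "compatible_at M l v \<longleftrightarrow> ((l v = Circ) = (l (M v) = Circ)) \<and> (l v \<noteq> Circ \<longrightarrow> ldir l (M v) \<noteq> ldir l v)"

definition compatible :: "nat \<Rightarrow> (lvl \<Rightarrow> lvl) \<Rightarrow> (lvl \<Rightarrow> ori) \<Rightarrow> bool" where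
  "compatible d M l \<longleftrightarrow> (\<forall>v\<in>levels d. M v \<noteq> v \<longrightarrow> compatible_at M l v)"

lemma orientable_upper_iff:
  assumes b1: "b1 \<in> brauer d"
  shows "orientable d b1 u t \<longleftrightarrow> compatible d (upper d b1) (level_label u t s)"
proof -
  have "orientable d b1 u t \<longleftrightarrow> (\<forall>x\<in>verts d. compatible_at (upper d b1) (level_label u t s) (up_v x))"
    unfolding orientable_def compatible_at_def vlabel_up[of u t _ s] outgoing_up[of u t _ s]
    by (auto simp: upper_up_v)
  also have "\<dots> \<longleftrightarrow> compatible d (upper d b1) (level_label u t s)"
    unfolding compatible_def using upper_fixed upper_moves[OF b1] up_v_levels by fast
  finally show ?thesis .
qed

lemma orientable_lower_iff:
  assumes b2: "b2 \<in> brauer d"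
  shows "orientable d b2 t s \<longleftrightarrow> compatible d (lower d b2) (level_label u t s)"
proof -
  have "orientable d b2 t s \<longleftrightarrow> (\<forall>x\<in>verts d. compatible_at (lower d b2) (level_label u t s) (lo_v x))"
    unfolding orientable_def compatible_at_def vlabel_lo[of t s _ u] outgoing_lo[of t s _ u]
    by (auto simp: lower_lo_v)
  also have "\<dots> \<longleftrightarrow> compatible d (lower d b2) (level_label u t s)"
    unfolding compatible_def using lower_fixed lower_moves[OF b2] lo_v_levels by fast
  finally show ?thesis .
qed

context
  fixes d :: nat and b1 b2 :: diag
  assumes b1: "b1 \<in> brauer d" and b2: "b2 \<in> brauer d"
begin

definition coherent :: "(lvl \<Rightarrow> ori) \<Rightarrow> bool" where
  "coherent l \<longleftrightarrow> compatible d (upper d b1) l \<and> compatible d (lower d b2) l"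

lemma coherent_step:
  assumes "coherent l" "(y, z) \<in> conn d b1 b2" "z \<noteq> y"
  shows "(l y = Circ) = (l z = Circ) \<and> (l y \<noteq> Circ \<longrightarrow> ldir l z \<noteq> ldir l y)"
  using assms upper_moved_levels lower_moved_levels
  unfolding coherent_def compatible_def compatible_at_def step_rel_iff by metis

lemma proper_col_step:
  assumes "proper_col d b1 b2 a w" "(a, y) \<in> (conn d b1 b2)\<^sup>*" "(y, z) \<in> conn d b1 b2" "z \<noteq> y"
  shows "w z \<noteq> w y"
  using assms unfolding proper_col_def[OF b1 b2] step_rel_iff by metis

lemma coherent_circ_iff:
  assumes c: "coherent l" and ac: "(a, c) \<in> (conn d b1 b2)\<^sup>*"
  shows "(l a = Circ) = (l c = Circ)"
  using ac by induction (use coherent_step[OF c] in auto)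

lemma coherent_ldir_colour:
  assumes c: "coherent l" and pr: "proper_col d b1 b2 a w" and ac: "(a, c) \<in> (conn d b1 b2)\<^sup>*"
    and na: "l a \<noteq> Circ"
  shows "(ldir l c = w c) = (ldir l a = w a)"
  using ac
proof (induction rule: rtrancl_induct)
  case (step y z)
  have "l y \<noteq> Circ" using coherent_circ_iff[OF c step.hyps(1)] na by simp
  then show ?case
    using step coherent_step[OF c step.hyps(2)] proper_col_step[OF pr step.hyps] by (cases "z = y") auto
qed simp

definition comp_block :: "vert \<Rightarrow> vert set" where
  "comp_block y = {x \<in> verts d. (outer_v y, outer_v x) \<in> (conn d b1 b2)\<^sup>*}"

lemma comp_diag_blocks: "comp_diag d b1 b2 = {comp_block y | y. y \<in> verts d}"
  unfolding comp_diag_def comp_block_def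
    stack_rel_rtrancl_eq[OF brauer_gen_brauer[OF b1] brauer_gen_brauer[OF b2]] ..

lemma comp_block_self: "y \<in> verts d \<Longrightarrow> y \<in> comp_block y"
  unfolding comp_block_def by simp

lemma comp_block_eq: "x \<in> comp_block y \<Longrightarrow> comp_block x = comp_block y"
  unfolding comp_block_def using conn_trans_iff[OF b1 b2] by blast

lemma comp_block_pair:
  assumes y: "y \<in> verts d"
  shows "\<exists>y'\<in>verts d. y' \<noteq> y \<and> comp_block y = {y, y'}"
proof -
  obtain z where z: "z \<noteq> outer_v y" "(outer_v y, z) \<in> (conn d b1 b2)\<^sup>*"
      "\<And>w. (outer_v y, w) \<in> (conn d b1 b2)\<^sup>* \<and> outer w \<longleftrightarrow> w = outer_v y \<or> w = z"
    using outer_component[OF b1 b2 outer_v_levels[OF y] outer_outer_v] by blast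
  obtain y' where y': "y' \<in> verts d" "z = outer_v y'"
    using outer_levels_ex[OF conn_levels[OF b1 b2 z(2) outer_v_levels[OF y]]] z(3) by blast
  have "comp_block y = {y, y'}"
    unfolding comp_block_def using y y' z(3) outer_outer_v outer_v_inj by auto
  moreover have "y' \<noteq> y" using z(1) y'(2) by auto
  ultimately show ?thesis using y' by blast
qed

lemma comp_diag_brauer: "comp_diag d b1 b2 \<in> brauer d"
  unfolding brauer_def gen_brauer_def
proof (intro CollectI conjI ballI)
  fix B assume "B \<in> comp_diag d b1 b2"
  then obtain y where y: "y \<in> verts d" "B = comp_block y" unfolding comp_diag_blocks by blast
  obtain y' where "y' \<in> verts d" "y' \<noteq> y" "comp_block y = {y, y'}" using comp_block_pair[OF y(1)] by blast
  thus "B \<subseteq> verts d" "card B = 1 \<or> card B = 2" "card B = 2" using y by auto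
next
  fix x assume x: "x \<in> verts d"
  show "\<exists>!B. B \<in> comp_diag d b1 b2 \<and> x \<in> B"
  proof (rule ex1I[of _ "comp_block x"])
    show "comp_block x \<in> comp_diag d b1 b2 \<and> x \<in> comp_block x"
      unfolding comp_diag_blocks using x comp_block_self by blast
  next
    fix B assume "B \<in> comp_diag d b1 b2 \<and> x \<in> B"
    then obtain y where "B = comp_block y" "x \<in> comp_block y" unfolding comp_diag_blocks by blast
    thus "B = comp_block x" using comp_block_eq by simp
  qed
qed

lemma comp_block_partner: "y \<in> verts d \<Longrightarrow> comp_block y = {y, partner (comp_diag d b1 b2) y}"
  using block_eq_partner[OF brauer_gen_brauer[OF comp_diag_brauer]] comp_block_self
  unfolding comp_diag_blocks by blast

end

section \<open>Summing over middle orientations\<close>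

lemma UNIV_ori: "(UNIV :: ori set) = {Up, Down, Circ}"
  using ori.exhaust by auto

lemma finite_oseq_hat: "finite (oseq_hat d)"
proof -
  have "finite (UNIV :: ori set)" unfolding UNIV_ori by simp
  from finite_lists_length_eq[OF this, of d] show ?thesis unfolding oseq_hat_def by simp
qed

lemma ob_comp_bvec:
  assumes a: "a \<in> gen_brauer d" and b: "b \<in> gen_brauer d"
  shows "ob_comp d q (bvec a) (bvec b) c = (if comp_diag d a b = c then q ^ n_loops d a b else 0)"
proof -
  have "ob_comp d q (bvec a) (bvec b) c = (\<Sum>x\<in>gen_brauer d. if x = a then (\<Sum>y\<in>gen_brauer d.
       (if y = b then (if comp_diag d x y = c then q ^ n_loops d x y else 0) else 0)) else 0)"
    unfolding ob_comp_def bvec_def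
  proof (intro sum.cong refl)
    fix x y
    show "(\<Sum>y\<in>gen_brauer d. if comp_diag d x y = c then (if x = a then 1 else 0) * (if y = b then 1 else 0) * q ^ n_loops d x y else 0)
        = (if x = a then \<Sum>y\<in>gen_brauer d. if y = b then if comp_diag d x y = c then q ^ n_loops d x y else 0 else 0 else 0)"
    proof (cases "x = a")
      case True
      have "\<And>y. (if comp_diag d x y = c then (if x = a then 1 else 0) * (if y = b then 1 else 0) * q ^ n_loops d x y else 0)
         = (if y = b then if comp_diag d x y = c then q ^ n_loops d x y else 0 else (0::complex))"
        using True by simp
      hence "(\<Sum>y\<in>gen_brauer d. if comp_diag d x y = c then (if x = a then 1 else 0) * (if y = b then 1 else 0) * q ^ n_loops d x y else 0)
         = (\<Sum>y\<in>gen_brauer d. if y = b then if comp_diag d x y = c then q ^ n_loops d x y else 0 else 0)"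
        by (rule sum.cong[OF refl])
      thus ?thesis using True by simp
    next
      case False thus ?thesis by (simp only: if_False mult_zero_left mult_zero_right if_cancel sum.neutral_const)
    qed
  qed
  also have "\<dots> = (if comp_diag d a b = c then q ^ n_loops d a b else 0)"
    using a b finite_gen_brauer by simp
  finally show ?thesis .
qed

lemma ob_comp_zero_left: "ob_comp d q (\<lambda>_. 0) g c = 0" unfolding ob_comp_def by (simp only: mult_zero_left mult_zero_right if_cancel sum.neutral_const)
lemma ob_comp_zero_right: "ob_comp d q g (\<lambda>_. 0) c = 0" unfolding ob_comp_def by (simp only: mult_zero_left mult_zero_right if_cancel sum.neutral_const)

context
  fixes d :: nat and b1 b2 :: diag and u s :: "ori list"
  assumes b1: "b1 \<in> brauer d" and b2: "b2 \<in> brauer d" and lu: "length u = d" and ls: "length s = d"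
begin

abbreviation "lab t \<equiv> level_label u t s"
abbreviation "coh \<equiv> coherent d b1 b2"

lemma orientable_both_iff_coherent: "(orientable d b1 u t \<and> orientable d b2 t s) \<longleftrightarrow> coh (lab t)"
  unfolding coherent_def[OF b1 b2] using orientable_upper_iff[OF b1, of u t s] orientable_lower_iff[OF b2, of t s u] by blast

lemma coherent_imp_orientable_comp:
  assumes c: "coh (lab t)"
  shows "orientable d (comp_diag d b1 b2) u s"
  unfolding orientable_def
proof (intro ballI conjI impI)
  fix x assume x: "x \<in> verts d"
  let ?y = "partner (comp_diag d b1 b2) x"
  let ?l = "lab t"
  have yb: "?y \<in> comp_block d b1 b2 x" using comp_block_partner[OF b1 b2 x] by blast
  hence xy: "(outer_v x, outer_v ?y) \<in> (conn d b1 b2)\<^sup>*" unfolding comp_block_def[OF b1 b2] by blast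
  have ne: "?y \<noteq> x" using partner_neq[OF comp_diag_brauer[OF b1 b2] x] .
  show "(vlabel u s x = Circ) = (vlabel u s ?y = Circ)"
    unfolding vlabel_outer[of u s _ t] using coherent_circ_iff[OF b1 b2 c xy] .
  assume nc: "vlabel u s x \<noteq> Circ"
  obtain w where pw: "proper_col d b1 b2 (outer_v x) w" "end_parity d b1 b2 (outer_v x) w"
    using colouring_exists[OF b1 b2 outer_v_levels[OF x]] by blast
  have wp: "(ldir ?l (outer_v ?y) = w (outer_v ?y)) = (ldir ?l (outer_v x) = w (outer_v x))"
    using coherent_ldir_colour[OF b1 b2 c pw(1) xy] nc vlabel_outer[of u s x t] by simp
  have "(w (outer_v x) \<noteq> w (outer_v ?y)) = (is_top (outer_v x) = is_top (outer_v ?y))"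
    using pw(2) unfolding end_parity_def[OF b1 b2] using xy outer_outer_v ne outer_v_inj by blast
  thus "outgoing u s x \<noteq> outgoing u s ?y"
    unfolding outgoing_outer[of u s _ t] using wp by blast
qed

definition cut_top where "cut_top t = cut_circ d b1 (vlabel u t)"
definition cut_bot where "cut_bot t = cut_circ d b2 (vlabel t s)"

lemma coherent_imp_orientable: assumes "coh (lab t)" shows "orientable d b1 u t" "orientable d b2 t s"
  using orientable_both_iff_coherent assms by auto

lemma upper_cut_top:
  assumes c: "coh (lab t)"
  shows "upper d (cut_top t) = (\<lambda>v. if lab t v \<noteq> Circ then upper d b1 v else v)"
proof
  fix v
  show "upper d (cut_top t) v = (if lab t v \<noteq> Circ then upper d b1 v else v)"
  proof (cases "v \<in> up_v ` verts d")
    case True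
    then obtain x where x: "x \<in> verts d" "v = up_v x" by blast
    then show ?thesis unfolding cut_top_def
      using partner_cut_circ[OF b1 coherent_imp_orientable(1)[OF c] x(1)] vlabel_up[of u t x s]
        upper_up_v[OF x(1)] by auto
  qed (simp add: upper_fixed)
qed

lemma lower_cut_bot:
  assumes c: "coh (lab t)"
  shows "lower d (cut_bot t) = (\<lambda>v. if lab t v \<noteq> Circ then lower d b2 v else v)"
proof
  fix v
  show "lower d (cut_bot t) v = (if lab t v \<noteq> Circ then lower d b2 v else v)"
  proof (cases "v \<in> lo_v ` verts d")
    case True
    then obtain x where x: "x \<in> verts d" "v = lo_v x" by blast
    then show ?thesis unfolding cut_bot_def
      using partner_cut_circ[OF b2 coherent_imp_orientable(2)[OF c] x(1)] vlabel_lo[of t s x u]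
        lower_lo_v[OF x(1)] by auto
  qed (simp add: lower_fixed)
qed

lemma stack_cut_rtrancl_iff:
  assumes c: "coh (lab t)"
  shows "(a, c) \<in> (stack_rel (cut_top t) (cut_bot t))\<^sup>*
    \<longleftrightarrow> a = c \<or> ((a, c) \<in> (conn d b1 b2)\<^sup>* \<and> lab t a \<noteq> Circ)"
proof -
  have g: "cut_top t \<in> gen_brauer d" "cut_bot t \<in> gen_brauer d"
    using cut_circ_gen_brauer[OF b1 coherent_imp_orientable(1)[OF c]]
      cut_circ_gen_brauer[OF b2 coherent_imp_orientable(2)[OF c]]
    unfolding cut_top_def cut_bot_def by auto
  have "\<And>y z. (y, z) \<in> conn d b1 b2 \<Longrightarrow> lab t y \<noteq> Circ \<Longrightarrow> lab t z \<noteq> Circ"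
    using coherent_circ_iff[OF b1 b2 c r_into_rtrancl] by blast
  then show ?thesis
    unfolding stack_rel_rtrancl_eq[OF g] upper_cut_top[OF c] lower_cut_bot[OF c]
    by (rule rtrancl_step_rel_restrict)
qed

definition cut_block where "cut_block t y = {x \<in> verts d. (outer_v y, outer_v x) \<in> (stack_rel (cut_top t) (cut_bot t))\<^sup>*}"

lemma cut_block_eq:
  assumes c: "coh (lab t)" and y: "y \<in> verts d"
  shows "cut_block t y = (if vlabel u s y = Circ then {y} else comp_block d b1 b2 y)"
proof (cases "vlabel u s y = Circ")
  case True
  hence "lab t (outer_v y) = Circ" using vlabel_outer[of u s y t] by simp
  hence "cut_block t y = {x \<in> verts d. outer_v y = outer_v x}" unfolding cut_block_def stack_cut_rtrancl_iff[OF c] by auto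
  also have "\<dots> = {y}" using y outer_v_inj by auto
  finally show ?thesis using True by simp
next
  case False
  hence "lab t (outer_v y) \<noteq> Circ" using vlabel_outer[of u s y t] by simp
  hence "cut_block t y = {x \<in> verts d. outer_v y = outer_v x \<or> (outer_v y, outer_v x) \<in> (conn d b1 b2)\<^sup>*}" unfolding cut_block_def stack_cut_rtrancl_iff[OF c] by auto
  also have "\<dots> = comp_block d b1 b2 y" unfolding comp_block_def[OF b1 b2] using outer_v_inj by auto
  finally show ?thesis using False by simp
qed

lemma comp_block_circ_iff:
  assumes c: "coh (lab t)" and x: "x \<in> comp_block d b1 b2 y"
  shows "(vlabel u s x = Circ) = (vlabel u s y = Circ)"
proof -
  have "(outer_v y, outer_v x) \<in> (conn d b1 b2)\<^sup>*" using x unfolding comp_block_def[OF b1 b2] by blast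
  from coherent_circ_iff[OF b1 b2 c this] show ?thesis using vlabel_outer[of u s _ t] by simp
qed

lemma comp_cut_circ:
  assumes c: "coh (lab t)"
  shows "comp_diag d (cut_top t) (cut_bot t) = cut_circ d (comp_diag d b1 b2) (vlabel u s)"
proof -
  have cd: "comp_diag d (cut_top t) (cut_bot t) = {cut_block t y | y. y \<in> verts d}" unfolding comp_diag_def cut_block_def ..
  show ?thesis unfolding cd
  proof (intro set_eqI iffI)
    fix B assume "B \<in> {cut_block t y | y. y \<in> verts d}"
    then obtain y where y: "y \<in> verts d" "B = cut_block t y" by blast
    show "B \<in> cut_circ d (comp_diag d b1 b2) (vlabel u s)"
    proof (cases "vlabel u s y = Circ")
      case True thus ?thesis using y cut_block_eq[OF c y(1)] unfolding cut_circ_def by auto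
    next
      case False
      have "B = comp_block d b1 b2 y" using y cut_block_eq[OF c y(1)] False by simp
      moreover have "comp_block d b1 b2 y \<in> comp_diag d b1 b2" unfolding comp_diag_blocks[OF b1 b2] using y(1) by blast
      moreover have "\<forall>x\<in>comp_block d b1 b2 y. vlabel u s x \<noteq> Circ" using comp_block_circ_iff[OF c] False by blast
      ultimately show ?thesis unfolding cut_circ_def by blast
    qed
  next
    fix B assume "B \<in> cut_circ d (comp_diag d b1 b2) (vlabel u s)"
    then consider "B \<in> comp_diag d b1 b2" "\<forall>x\<in>B. vlabel u s x \<noteq> Circ" | x where "x \<in> verts d" "vlabel u s x = Circ" "B = {x}"
      unfolding cut_circ_def by blast
    thus "B \<in> {cut_block t y | y. y \<in> verts d}"
    proof cases
      case 1
      then obtain y where y: "y \<in> verts d" "B = comp_block d b1 b2 y" unfolding comp_diag_blocks[OF b1 b2] by blast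
      have "vlabel u s y \<noteq> Circ" using 1(2) y comp_block_self[OF b1 b2] by blast
      hence "B = cut_block t y" using cut_block_eq[OF c y(1)] y(2) by simp
      thus ?thesis using y(1) by blast
    next
      case 2
      hence "B = cut_block t x" using cut_block_eq[OF c 2(1)] by simp
      thus ?thesis using 2(1) by blast
    qed
  qed
qed

definition comp_class where "comp_class v = {z. (v, z) \<in> (conn d b1 b2)\<^sup>*}"

definition loops where "loops = {comp_class (Mid j) | j. j < d \<and> (\<forall>x\<in>verts d. (Mid j, outer_v x) \<notin> (conn d b1 b2)\<^sup>*)}"

lemma comp_class_levels: "v \<in> levels d \<Longrightarrow> comp_class v \<subseteq> levels d"
  unfolding comp_class_def using conn_levels[OF b1 b2] by blast

lemma finite_comp_class: "v \<in> levels d \<Longrightarrow> finite (comp_class v)"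
  using comp_class_levels finite_levels finite_subset by blast

lemma card_comp_class_Mid: assumes j: "j < d" shows "2 \<le> card (comp_class (Mid j))"
proof -
  have "Mid j \<in> up_v ` verts d" using j unfolding up_v_image_iff by blast
  hence ne: "upper d b1 (Mid j) \<noteq> Mid j" using upper_moves[OF b1] by blast
  have "(Mid j, upper d b1 (Mid j)) \<in> conn d b1 b2" unfolding step_rel_iff by simp
  hence "{Mid j, upper d b1 (Mid j)} \<subseteq> comp_class (Mid j)" unfolding comp_class_def by auto
  moreover have "card {Mid j, upper d b1 (Mid j)} = 2" using ne by simp
  ultimately show ?thesis using card_mono[OF finite_comp_class[OF Mid_levels[OF j]]] by metis
qed

lemma finite_loops: "finite loops"
proof -
  have "loops \<subseteq> Pow (levels d)" unfolding loops_def using comp_class_levels Mid_levels by blast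
  thus ?thesis using finite_levels finite_subset by blast
qed

lemma n_loops_eq_card_loops: "n_loops d b1 b2 = card loops"
proof -
  have "{{v. (Mid j, v) \<in> (stack_rel b1 b2)\<^sup>*} | j. j < d
        \<and> (\<forall>x\<in>verts d. (Mid j, outer_v x) \<notin> (stack_rel b1 b2)\<^sup>*)
        \<and> 2 \<le> card {v. (Mid j, v) \<in> (stack_rel b1 b2)\<^sup>*}} = loops"
    unfolding stack_rel_rtrancl_eq[OF brauer_gen_brauer[OF b1] brauer_gen_brauer[OF b2]] loops_def comp_class_def[symmetric] using card_comp_class_Mid by blast
  thus ?thesis unfolding n_loops_def by simp
qed

lemma n_loops_cut:
  assumes c: "coh (lab t)"
  shows "n_loops d (cut_top t) (cut_bot t) = card {C \<in> loops. \<forall>z\<in>C. lab t z \<noteq> Circ}"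
proof -
  let ?R = "(stack_rel (cut_top t) (cut_bot t))\<^sup>*"
  have cl: "{v. (Mid j, v) \<in> ?R} = (if lab t (Mid j) = Circ then {Mid j} else comp_class (Mid j))" for j
    unfolding stack_cut_rtrancl_iff[OF c] comp_class_def by auto
  have "{{v. (Mid j, v) \<in> ?R} | j. j < d
        \<and> (\<forall>x\<in>verts d. (Mid j, outer_v x) \<notin> ?R)
        \<and> 2 \<le> card {v. (Mid j, v) \<in> ?R}} = {C \<in> loops. \<forall>z\<in>C. lab t z \<noteq> Circ}"
  proof (intro set_eqI iffI)
    fix C assume "C \<in> {{v. (Mid j, v) \<in> ?R} | j. j < d
        \<and> (\<forall>x\<in>verts d. (Mid j, outer_v x) \<notin> ?R)
        \<and> 2 \<le> card {v. (Mid j, v) \<in> ?R}}"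
    then obtain j where j: "j < d" "C = {v. (Mid j, v) \<in> ?R}" "\<forall>x\<in>verts d. (Mid j, outer_v x) \<notin> ?R"
        "2 \<le> card {v. (Mid j, v) \<in> ?R}" by blast
    have nc: "lab t (Mid j) \<noteq> Circ" using j(4) cl[of j] by (auto split: if_splits)
    have C: "C = comp_class (Mid j)" using j(2) cl[of j] nc by simp
    have "\<forall>x\<in>verts d. (Mid j, outer_v x) \<notin> (conn d b1 b2)\<^sup>*" using j(3) nc unfolding stack_cut_rtrancl_iff[OF c] by auto
    hence "C \<in> loops" unfolding loops_def using C j(1) by blast
    moreover have "\<forall>z\<in>C. lab t z \<noteq> Circ" using C nc coherent_circ_iff[OF b1 b2 c] unfolding comp_class_def by blast
    ultimately show "C \<in> {C \<in> loops. \<forall>z\<in>C. lab t z \<noteq> Circ}" by blast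
  next
    fix C assume "C \<in> {C \<in> loops. \<forall>z\<in>C. lab t z \<noteq> Circ}"
    then obtain j where j: "j < d" "C = comp_class (Mid j)" "\<forall>x\<in>verts d. (Mid j, outer_v x) \<notin> (conn d b1 b2)\<^sup>*"
       and nz: "\<forall>z\<in>C. lab t z \<noteq> Circ" unfolding loops_def by blast
    have nc: "lab t (Mid j) \<noteq> Circ" using nz j(2) unfolding comp_class_def by blast
    have e: "{v. (Mid j, v) \<in> ?R} = C" using cl[of j] nc j(2) by simp
    have "\<forall>x\<in>verts d. (Mid j, outer_v x) \<notin> ?R"
      using j(3) unfolding stack_cut_rtrancl_iff[OF c] by (auto simp: outer_v_def split: sum.splits)
    moreover have "2 \<le> card {v. (Mid j, v) \<in> ?R}" using e j card_comp_class_Mid by simp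
    ultimately show "C \<in> {{v. (Mid j, v) \<in> ?R} | j. j < d
        \<and> (\<forall>x\<in>verts d. (Mid j, outer_v x) \<notin> ?R)
        \<and> 2 \<le> card {v. (Mid j, v) \<in> ?R}}" using e j(1) by blast
  qed
  thus ?thesis unfolding n_loops_def by simp
qed

lemma proper_col_cong: "(z, y) \<in> (conn d b1 b2)\<^sup>* \<Longrightarrow> proper_col d b1 b2 y = proper_col d b1 b2 z"
  unfolding proper_col_def[OF b1 b2, abs_def] using conn_trans_iff[OF b1 b2] conn_sym[OF b1 b2] by (intro ext) blast
lemma end_parity_cong: "(z, y) \<in> (conn d b1 b2)\<^sup>* \<Longrightarrow> end_parity d b1 b2 y = end_parity d b1 b2 z"
  unfolding end_parity_def[OF b1 b2, abs_def] using conn_trans_iff[OF b1 b2] conn_sym[OF b1 b2] by (intro ext) blast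

text \<open>One proper colouring per component: the choice made at \<open>z\<close> depends only on the component
  of \<open>z\<close> (\<open>proper_col_cong\<close>, \<open>end_parity_cong\<close>).\<close>

definition colour :: "lvl \<Rightarrow> bool" where
  "colour z = (SOME w. proper_col d b1 b2 z w \<and> end_parity d b1 b2 z w) z"

lemma colour_good: assumes z: "z \<in> levels d" shows "proper_col d b1 b2 z colour \<and> end_parity d b1 b2 z colour"
proof -
  define W where "W = (SOME w. proper_col d b1 b2 z w \<and> end_parity d b1 b2 z w)"
  have PW: "proper_col d b1 b2 z W \<and> end_parity d b1 b2 z W"
    unfolding W_def using someI_ex[OF colouring_exists[OF b1 b2 z]] .
  have agree: "colour y = W y" if "(z, y) \<in> (conn d b1 b2)\<^sup>*" for y
    unfolding colour_def W_def proper_col_cong[OF that] end_parity_cong[OF that] ..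
  have "proper_col d b1 b2 z colour"
    unfolding proper_col_def[OF b1 b2]
  proof (intro allI impI conjI)
    fix c assume zc: "(z, c) \<in> (conn d b1 b2)\<^sup>*"
    have "(z, upper d b1 c) \<in> (conn d b1 b2)\<^sup>*" "(z, lower d b2 c) \<in> (conn d b1 b2)\<^sup>*"
      using zc by (auto intro: rtrancl_into_rtrancl simp: step_rel_iff)
    moreover have "(upper d b1 c \<noteq> c \<longrightarrow> W (upper d b1 c) \<noteq> W c) \<and> (lower d b2 c \<noteq> c \<longrightarrow> W (lower d b2 c) \<noteq> W c)"
      using PW zc unfolding proper_col_def[OF b1 b2] by blast
    ultimately show "upper d b1 c \<noteq> c \<Longrightarrow> colour (upper d b1 c) \<noteq> colour c" "lower d b2 c \<noteq> c \<Longrightarrow> colour (lower d b2 c) \<noteq> colour c"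
      using agree zc by auto
  qed
  moreover have "end_parity d b1 b2 z colour"
    using PW agree unfolding end_parity_def[OF b1 b2] by metis
  ultimately show ?thesis by blast
qed

definition loop_rep :: "lvl set \<Rightarrow> lvl" where "loop_rep C = (SOME z. z \<in> C)"

lemma loopsE: assumes "C \<in> loops"
  obtains j where "j < d" "C = comp_class (Mid j)" "\<forall>x\<in>verts d. (Mid j, outer_v x) \<notin> (conn d b1 b2)\<^sup>*"
  using assms unfolding loops_def by blast

lemma loop_rep_in: assumes "C \<in> loops" shows "loop_rep C \<in> C"
proof -
  obtain j where "C = comp_class (Mid j)" using loopsE[OF assms] by metis
  hence "Mid j \<in> C" unfolding comp_class_def by simp
  thus ?thesis unfolding loop_rep_def by (rule someI)
qed

lemma loop_rep_reach: assumes "C \<in> loops" "C = comp_class v" shows "(v, loop_rep C) \<in> (conn d b1 b2)\<^sup>*"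
  using loop_rep_in[OF assms(1)] assms(2) unfolding comp_class_def by blast

text \<open>A middle orientation puts each closed loop in one of three states: \<open>0\<close> (all \<open>\<circ>\<close>), or
  \<open>1\<close>/\<open>2\<close> for the two orientations, told apart by comparing with \<open>colour\<close>.\<close>

definition loop_state :: "ori list \<Rightarrow> lvl set \<Rightarrow> nat" where
  "loop_state t = restrict (\<lambda>C. if lab t (loop_rep C) = Circ then 0 else if ldir (lab t) (loop_rep C) = colour (loop_rep C) then 1 else 2) loops"

definition middles where "middles = {t \<in> oseq_hat d. coh (lab t)}"

lemma loop_state_PiE: "loop_state t \<in> loops \<rightarrow>\<^sub>E {0,1,2}"
  unfolding loop_state_def by auto

lemma loop_rep_reach_mem: assumes C: "C \<in> loops" and z: "z \<in> C" shows "(loop_rep C, z) \<in> (conn d b1 b2)\<^sup>*"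
proof -
  obtain j where j: "C = comp_class (Mid j)" using loopsE[OF C] by metis
  have "(Mid j, loop_rep C) \<in> (conn d b1 b2)\<^sup>*" using loop_rep_reach[OF C j] .
  moreover have "(Mid j, z) \<in> (conn d b1 b2)\<^sup>*" using z j unfolding comp_class_def by blast
  ultimately show ?thesis using conn_trans_iff[OF b1 b2] conn_sym[OF b1 b2] by blast
qed

lemma live_loops_eq:
  assumes t: "coh (lab t)"
  shows "{C \<in> loops. \<forall>z\<in>C. lab t z \<noteq> Circ} = {C \<in> loops. loop_state t C \<noteq> 0}"
proof -
  have "(\<forall>z\<in>C. lab t z \<noteq> Circ) \<longleftrightarrow> lab t (loop_rep C) \<noteq> Circ" if C: "C \<in> loops" for C
    using coherent_circ_iff[OF b1 b2 t loop_rep_reach_mem[OF C]] loop_rep_in[OF C] by blast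
  thus ?thesis unfolding loop_state_def by auto
qed

lemma coherent_lab_eq:
  assumes ct: "coh (lab t)" and ct': "coh (lab t')" and v: "v \<in> levels d"
    and vr: "(v, r) \<in> (conn d b1 b2)\<^sup>*"
    and circ: "(lab t r = Circ) = (lab t' r = Circ)"
    and dir: "lab t r \<noteq> Circ \<Longrightarrow> lab t' r \<noteq> Circ \<Longrightarrow>
      (ldir (lab t) r = colour r) = (ldir (lab t') r = colour r)"
  shows "lab t v = lab t' v"
proof (cases "lab t v = Circ")
  case True
  then show ?thesis using circ coherent_circ_iff[OF b1 b2 ct vr] coherent_circ_iff[OF b1 b2 ct' vr] by simp
next
  case False
  have good: "proper_col d b1 b2 v colour" using colour_good[OF v] by blast
  have n': "lab t' v \<noteq> Circ" "lab t r \<noteq> Circ" "lab t' r \<noteq> Circ"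
    using False circ coherent_circ_iff[OF b1 b2 ct vr] coherent_circ_iff[OF b1 b2 ct' vr] by auto
  have "ldir (lab t) v = ldir (lab t') v"
    using dir[OF n'(2,3)] coherent_ldir_colour[OF b1 b2 ct good vr False]
      coherent_ldir_colour[OF b1 b2 ct' good vr n'(1)] by blast
  then show ?thesis using ldir_inj False n'(1) by blast
qed

lemma loop_state_inj:
  assumes t: "t \<in> middles" and t': "t' \<in> middles" and e: "loop_state t = loop_state t'"
  shows "t = t'"
proof -
  have ct: "coh (lab t)" and ct': "coh (lab t')" and lt: "length t = d" and lt': "length t' = d"
    using t t' unfolding middles_def oseq_hat_def by auto
  have "lab t (Mid j) = lab t' (Mid j)" if j: "j < d" for j
  proof (cases "\<exists>x\<in>verts d. (Mid j, outer_v x) \<in> (conn d b1 b2)\<^sup>*")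
    case True
    then obtain x where x: "(Mid j, outer_v x) \<in> (conn d b1 b2)\<^sup>*" by blast
    have "lab t (outer_v x) = lab t' (outer_v x)" using level_label_outer[OF outer_outer_v] by blast
    then show ?thesis using coherent_lab_eq[OF ct ct' Mid_levels[OF j] x] unfolding ldir_def by simp
  next
    case False
    let ?C = "comp_class (Mid j)"
    have C: "?C \<in> loops" unfolding loops_def using j False by blast
    have "loop_state t ?C = loop_state t' ?C" using e by simp
    then show ?thesis
      using coherent_lab_eq[OF ct ct' Mid_levels[OF j] loop_rep_reach[OF C refl]] C
      unfolding loop_state_def by (auto split: if_splits)
  qed
  then show ?thesis using lt lt' by (auto intro: nth_equalityI simp: level_label_def)
qed

definition reaches_outer :: "lvl \<Rightarrow> bool" where "reaches_outer v = (\<exists>e. outer e \<and> (v, e) \<in> (conn d b1 b2)\<^sup>*)"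
definition outer_end :: "lvl \<Rightarrow> lvl" where "outer_end v = (SOME e. outer e \<and> (v, e) \<in> (conn d b1 b2)\<^sup>*)"
abbreviation "lab0 \<equiv> level_label u [] s"

definition state_label :: "(lvl set \<Rightarrow> nat) \<Rightarrow> lvl \<Rightarrow> ori" where
  "state_label f v = (if reaches_outer v then (if lab0 (outer_end v) = Circ then Circ else if colour v = (ldir lab0 (outer_end v) = colour (outer_end v)) then Up else Down)
     else (if f (comp_class v) = 0 then Circ else if (f (comp_class v) = 1) = colour v then Up else Down))"

definition middle_of_state :: "(lvl set \<Rightarrow> nat) \<Rightarrow> ori list" where
  "middle_of_state f = map (\<lambda>j. state_label f (Mid j)) [0..<d]"

definition circ_state where "circ_state f v = (if reaches_outer v then lab0 (outer_end v) = Circ else f (comp_class v) = 0)"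
definition agree_state where "agree_state f v = (if reaches_outer v then ldir lab0 (outer_end v) = colour (outer_end v) else f (comp_class v) = 1)"

lemma outer_end: "reaches_outer v \<Longrightarrow> outer (outer_end v) \<and> (v, outer_end v) \<in> (conn d b1 b2)\<^sup>*"
  unfolding reaches_outer_def outer_end_def by (rule someI_ex)

lemma comp_class_invariants:
  assumes vc: "(v, c) \<in> (conn d b1 b2)\<^sup>*"
  shows "reaches_outer c = reaches_outer v" "outer_end c = outer_end v" "comp_class c = comp_class v"
proof -
  have eq: "\<And>e. (c, e) \<in> (conn d b1 b2)\<^sup>* \<longleftrightarrow> (v, e) \<in> (conn d b1 b2)\<^sup>*"
    using vc conn_trans_iff[OF b1 b2] conn_sym[OF b1 b2] by blast
  show "reaches_outer c = reaches_outer v" unfolding reaches_outer_def using eq by simp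
  show "outer_end c = outer_end v" unfolding outer_end_def using eq by simp
  show "comp_class c = comp_class v" unfolding comp_class_def using eq by simp
qed

lemma state_invariant: "(v, c) \<in> (conn d b1 b2)\<^sup>* \<Longrightarrow> circ_state f c = circ_state f v \<and> agree_state f c = agree_state f v"
  unfolding circ_state_def agree_state_def using comp_class_invariants by simp

lemma lab_middle_of_state: assumes v: "v \<in> levels d" shows "lab (middle_of_state f) v = (if outer v then lab0 v else state_label f v)"
proof (cases "outer v")
  case True thus ?thesis using level_label_outer by simp
next
  case False
  then obtain j where "v = Mid j" "j < d" using v unfolding levels_def outer_def by auto
  thus ?thesis unfolding middle_of_state_def level_label_def using False by simp
qed

lemma outer_end_rel:
  assumes compat: "orientable d (comp_diag d b1 b2) u s"
    and v: "v \<in> levels d" "outer v" and e: "outer e" "(v, e) \<in> (conn d b1 b2)\<^sup>*"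
  shows "(lab0 v = Circ) = (lab0 e = Circ) \<and> (lab0 v \<noteq> Circ \<longrightarrow> (ldir lab0 v = colour v) = (ldir lab0 e = colour e))"
proof -
  obtain x where x: "x \<in> verts d" "v = outer_v x" using outer_levels_ex[OF v] by blast
  have eL: "e \<in> levels d" using conn_levels[OF b1 b2 e(2) v(1)] .
  obtain y where y: "y \<in> verts d" "e = outer_v y" using outer_levels_ex[OF eL e(1)] by blast
  have "y \<in> comp_block d b1 b2 x" unfolding comp_block_def[OF b1 b2] using y x e(2) by simp
  hence "y = x \<or> y = partner (comp_diag d b1 b2) x" using comp_block_partner[OF b1 b2 x(1)] by blast
  thus ?thesis
  proof
    assume "y = x" thus ?thesis using x y by simp
  next
    assume yp: "y = partner (comp_diag d b1 b2) x"
    have ne: "y \<noteq> x" using yp partner_neq[OF comp_diag_brauer[OF b1 b2] x(1)] by simp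
    have ok: "(vlabel u s x = Circ) = (vlabel u s y = Circ)" "vlabel u s x \<noteq> Circ \<longrightarrow> outgoing u s x \<noteq> outgoing u s y"
      using compat x(1) yp unfolding orientable_def by blast+
    have l0: "\<And>z. vlabel u s z = lab0 (outer_v z)" using vlabel_outer by blast
    have par: "end_parity d b1 b2 v colour" using colour_good[OF v(1)] by blast
    have "(colour v \<noteq> colour e) = (is_top v = is_top e)"
      using par e v x y ne outer_v_inj unfolding end_parity_def[OF b1 b2] by blast
    moreover have "lab0 v \<noteq> Circ \<longrightarrow> (ldir lab0 v \<noteq> is_top v) \<noteq> (ldir lab0 e \<noteq> is_top e)"
      using ok(2) x y unfolding l0 outgoing_outer[of u s _ "[]"] by simp
    ultimately show ?thesis using ok(1) x y unfolding l0 by blast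
  qed
qed

lemma lab_middle_of_state_iff:
  assumes compat: "orientable d (comp_diag d b1 b2) u s" and v: "v \<in> levels d"
  shows "(lab (middle_of_state f) v = Circ) = circ_state f v \<and> (lab (middle_of_state f) v \<noteq> Circ \<longrightarrow> (ldir (lab (middle_of_state f)) v = colour v) = agree_state f v)"
proof (cases "outer v")
  case True
  have pv: "reaches_outer v" unfolding reaches_outer_def using True by blast
  have ep: "outer (outer_end v)" "(v, outer_end v) \<in> (conn d b1 b2)\<^sup>*" using outer_end[OF pv] by auto
  have "lab (middle_of_state f) v = lab0 v" using lab_middle_of_state[OF v] True by simp
  moreover have "ldir (lab (middle_of_state f)) v = ldir lab0 v" unfolding ldir_def using lab_middle_of_state[OF v] True by simp
  ultimately show ?thesis using outer_end_rel[OF compat v True ep] pv unfolding circ_state_def agree_state_def by simp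
next
  case False
  have l: "lab (middle_of_state f) v = state_label f v" using lab_middle_of_state[OF v] False by simp
  have w: "ldir (lab (middle_of_state f)) v = (state_label f v = Up)" unfolding ldir_def l using False by simp
  show ?thesis unfolding w l state_label_def circ_state_def agree_state_def by auto
qed

lemma middle_of_state_coherent:
  assumes compat: "orientable d (comp_diag d b1 b2) u s"
  shows "coh (lab (middle_of_state f))"
proof -
  let ?l = "lab (middle_of_state f)"
  have "compatible d M ?l"
    if edge: "\<And>v. (v, M v) \<in> conn d b1 b2" and lev: "\<And>v. v \<in> levels d \<Longrightarrow> M v \<in> levels d" for M
    unfolding compatible_def
  proof (intro ballI impI)
    fix v assume v: "v \<in> levels d" and ne: "M v \<noteq> v"
    have "colour (M v) \<noteq> colour v"
      using proper_col_step[OF b1 b2 conjunct1[OF colour_good[OF v]] rtrancl_refl edge ne] .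
    moreover have "circ_state f (M v) = circ_state f v \<and> agree_state f (M v) = agree_state f v"
      using state_invariant[OF r_into_rtrancl[OF edge]] .
    ultimately show "compatible_at M ?l v" unfolding compatible_at_def
      using lab_middle_of_state_iff[OF compat v] lab_middle_of_state_iff[OF compat lev[OF v]] by auto
  qed
  then show ?thesis unfolding coherent_def[OF b1 b2]
    using upper_levels[OF brauer_gen_brauer[OF b1]] lower_levels[OF brauer_gen_brauer[OF b2]]
    by (simp add: step_rel_iff)
qed

lemma middle_of_state_in: "orientable d (comp_diag d b1 b2) u s \<Longrightarrow> middle_of_state f \<in> middles"
  unfolding middles_def oseq_hat_def using middle_of_state_coherent by (simp add: middle_of_state_def)

lemma loop_state_middle_of_state:
  assumes compat: "orientable d (comp_diag d b1 b2) u s" and f: "f \<in> loops \<rightarrow>\<^sub>E {0,1,2}"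
  shows "loop_state (middle_of_state f) = f"
proof (rule PiE_ext[OF loop_state_PiE f])
  fix C assume C: "C \<in> loops"
  obtain j where j: "j < d" "C = comp_class (Mid j)" "\<forall>x\<in>verts d. (Mid j, outer_v x) \<notin> (conn d b1 b2)\<^sup>*"
    using loopsE[OF C] by metis
  let ?r = "loop_rep C"
  have jr: "(Mid j, ?r) \<in> (conn d b1 b2)\<^sup>*" using loop_rep_reach[OF C j(2)] .
  have rL: "?r \<in> levels d" using conn_levels[OF b1 b2 jr Mid_levels[OF j(1)]] .
  have np: "\<not> reaches_outer ?r"
  proof
    assume "reaches_outer ?r"
    then obtain e where e: "outer e" "(?r, e) \<in> (conn d b1 b2)\<^sup>*" unfolding reaches_outer_def by blast
    have je: "(Mid j, e) \<in> (conn d b1 b2)\<^sup>*" using jr e(2) by (rule rtrancl_trans)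
    have "e \<in> levels d" using conn_levels[OF b1 b2 je Mid_levels[OF j(1)]] .
    then obtain x where "x \<in> verts d" "e = outer_v x" using outer_levels_ex e(1) by blast
    thus False using j(3) je by blast
  qed
  have cr: "comp_class ?r = C" using comp_class_invariants(3)[OF jr] j(2) by simp
  have fC: "f C \<in> {0,1,2}" using f C by blast
  show "loop_state (middle_of_state f) C = f C"
    using lab_middle_of_state_iff[OF compat rL, of f] np cr fC C unfolding loop_state_def circ_state_def agree_state_def by auto
qed

lemma loop_state_bij:
  assumes compat: "orientable d (comp_diag d b1 b2) u s"
  shows "bij_betw loop_state middles (loops \<rightarrow>\<^sub>E {0,1,2})"
  unfolding bij_betw_def
proof
  show "inj_on loop_state middles" using loop_state_inj by (meson inj_onI)
  show "loop_state ` middles = loops \<rightarrow>\<^sub>E {0,1,2}"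
  proof
    show "loop_state ` middles \<subseteq> loops \<rightarrow>\<^sub>E {0,1,2}" using loop_state_PiE by (simp add: image_subset_iff)
    show "loops \<rightarrow>\<^sub>E {0,1,2} \<subseteq> loop_state ` middles"
    proof
      fix f :: "lvl set \<Rightarrow> nat" assume f: "f \<in> loops \<rightarrow>\<^sub>E {0,1,2}"
      have "f = loop_state (middle_of_state f)" using loop_state_middle_of_state[OF compat f] by simp
      thus "f \<in> loop_state ` middles" using middle_of_state_in[OF compat] by blast
    qed
  qed
qed

lemma sum_middles_loop_weight:
  fixes q :: complex
  assumes compat: "orientable d (comp_diag d b1 b2) u s"
  shows "(\<Sum>t\<in>middles. q ^ card {C \<in> loops. loop_state t C \<noteq> 0}) = (2 * q + 1) ^ card loops"
proof -
  let ?h = "\<lambda>C (a::nat). if a \<noteq> 0 then q else 1"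
  have g: "q ^ card {C \<in> loops. f C \<noteq> 0} = (\<Prod>C\<in>loops. ?h C (f C))" for f :: "lvl set \<Rightarrow> nat"
  proof -
    have "(\<Prod>C\<in>loops. ?h C (f C)) = (\<Prod>C\<in>loops \<inter> {C. f C \<noteq> 0}. q) * (\<Prod>C\<in>loops \<inter> - {C. f C \<noteq> 0}. 1)"
      by (rule prod.If_cases[OF finite_loops])
    also have "\<dots> = q ^ card (loops \<inter> {C. f C \<noteq> 0})" by simp
    also have "loops \<inter> {C. f C \<noteq> 0} = {C \<in> loops. f C \<noteq> 0}" by blast
    finally show ?thesis by simp
  qed
  have "(\<Sum>t\<in>middles. q ^ card {C \<in> loops. loop_state t C \<noteq> 0}) = (\<Sum>f\<in>loops \<rightarrow>\<^sub>E {0::nat,1,2}. q ^ card {C \<in> loops. f C \<noteq> 0})"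
    using sum.reindex_bij_betw[OF loop_state_bij[OF compat], of "\<lambda>f. q ^ card {C \<in> loops. f C \<noteq> 0}"] .
  also have "\<dots> = (\<Sum>f\<in>loops \<rightarrow>\<^sub>E {0::nat,1,2}. \<Prod>C\<in>loops. ?h C (f C))" using g by simp
  also have "\<dots> = (\<Prod>C\<in>loops. \<Sum>a\<in>{0::nat,1,2}. ?h C a)"
    by (rule prod_sum_PiE[symmetric]) (use finite_loops in auto)
  also have "\<dots> = (\<Prod>C\<in>loops. 2 * q + 1)" by (simp add: algebra_simps)
  also have "\<dots> = (2 * q + 1) ^ card loops" by (simp only: prod_constant)
  finally show ?thesis .
qed

lemma ob_comp_Mb:
  assumes t: "t \<in> oseq_hat d"
  shows "ob_comp d q (Mb d b1 (u,t)) (Mb d b2 (t,s)) c = (if coh (lab t) then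
    (if comp_diag d (cut_top t) (cut_bot t) = c then q ^ n_loops d (cut_top t) (cut_bot t) else 0) else 0)"
proof (cases "coh (lab t)")
  case True
  have us: "u \<in> oseq_hat d" "s \<in> oseq_hat d" using lu ls unfolding oseq_hat_def by auto
  have o: "orientable d b1 u t" "orientable d b2 t s" using coherent_imp_orientable[OF True] by auto
  have "Mb d b1 (u,t) = bvec (cut_top t)" "Mb d b2 (t,s) = bvec (cut_bot t)"
    using Mb_eq_cut_circ[OF b1] Mb_eq_cut_circ[OF b2] us t o unfolding cut_top_def cut_bot_def by simp_all
  with True show ?thesis using ob_comp_bvec[OF cut_circ_gen_brauer[OF b1 o(1)] cut_circ_gen_brauer[OF b2 o(2)]]
    unfolding cut_top_def cut_bot_def by simp
next
  case False
  then have "Mb d b1 (u,t) = (\<lambda>_. 0) \<or> Mb d b2 (t,s) = (\<lambda>_. 0)"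
    using orientable_both_iff_coherent Mb_eq_cut_circ[OF b1] Mb_eq_cut_circ[OF b2] by auto
  with False show ?thesis using ob_comp_zero_left ob_comp_zero_right by auto
qed

text \<open>The key identity: summing over middle orientations reproduces the product in the
  Brauer algebra, each closed loop contributing \<open>2 q + 1\<close> (one \<open>\<circ>\<close> and two orientations).\<close>

lemma sum_middle_ob_comp:
  fixes q :: complex
  shows "(\<Sum>t\<in>oseq_hat d. ob_comp d q (Mb d b1 (u,t)) (Mb d b2 (t,s)) c)
        = (2 * q + 1) ^ n_loops d b1 b2 * Mb d (comp_diag d b1 b2) (u,s) c"
proof -
  have us: "u \<in> oseq_hat d" "s \<in> oseq_hat d" using lu ls unfolding oseq_hat_def by auto
  define X where "X t = (if comp_diag d (cut_top t) (cut_bot t) = c then q ^ n_loops d (cut_top t) (cut_bot t) else 0)" for t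
  have "(\<Sum>t\<in>oseq_hat d. ob_comp d q (Mb d b1 (u,t)) (Mb d b2 (t,s)) c)
      = (\<Sum>t\<in>oseq_hat d. if coh (lab t) then X t else 0)" using ob_comp_Mb unfolding X_def by simp
  also have "\<dots> = (\<Sum>t\<in>middles. X t)"
    unfolding middles_def by (rule sum.inter_filter[OF finite_oseq_hat, symmetric])
  finally have L: "(\<Sum>t\<in>oseq_hat d. ob_comp d q (Mb d b1 (u,t)) (Mb d b2 (t,s)) c) = (\<Sum>t\<in>middles. X t)" .
  show ?thesis
  proof (cases "orientable d (comp_diag d b1 b2) u s")
    case compat: True
    let ?C0 = "cut_circ d (comp_diag d b1 b2) (vlabel u s)"
    have "X t = (if ?C0 = c then q ^ card {C \<in> loops. loop_state t C \<noteq> 0} else 0)" if t: "t \<in> middles" for t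
    proof -
      have ct: "coh (lab t)" using t unfolding middles_def by blast
      show ?thesis unfolding X_def comp_cut_circ[OF ct] n_loops_cut[OF ct] live_loops_eq[OF ct] ..
    qed
    hence "(\<Sum>t\<in>middles. X t) = (if ?C0 = c then (\<Sum>t\<in>middles. q ^ card {C \<in> loops. loop_state t C \<noteq> 0}) else 0)"
      by simp
    also have "\<dots> = (if ?C0 = c then (2 * q + 1) ^ card loops else 0)" using sum_middles_loop_weight[OF compat] by simp
    also have "\<dots> = (2 * q + 1) ^ n_loops d b1 b2 * Mb d (comp_diag d b1 b2) (u,s) c"
      using Mb_eq_cut_circ[OF comp_diag_brauer[OF b1 b2]] us compat n_loops_eq_card_loops unfolding bvec_def by auto
    finally show ?thesis using L by simp
  next
    case False
    hence "middles = {}" unfolding middles_def using coherent_imp_orientable_comp by blast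
    moreover have "Mb d (comp_diag d b1 b2) (u,s) = (\<lambda>_. 0)" using Mb_eq_cut_circ[OF comp_diag_brauer[OF b1 b2]] False by simp
    ultimately show ?thesis using L by simp
  qed
qed

end

section \<open>The functor\<close>

lemma sum_swap3: "(\<Sum>a\<in>A. \<Sum>b\<in>B. \<Sum>c\<in>C. f a b c) = (\<Sum>b\<in>B. \<Sum>c\<in>C. \<Sum>a\<in>A. f a b c)"
proof -
  have "(\<Sum>a\<in>A. \<Sum>b\<in>B. \<Sum>c\<in>C. f a b c) = (\<Sum>b\<in>B. \<Sum>a\<in>A. \<Sum>c\<in>C. f a b c)"
    by (rule sum.swap)
  also have "\<dots> = (\<Sum>b\<in>B. \<Sum>c\<in>C. \<Sum>a\<in>A. f a b c)"
    by (rule sum.cong[OF refl], rule sum.swap)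
  finally show ?thesis .
qed

lemma ob_comp_sum_sum:
  fixes a b :: "'i \<Rightarrow> complex"
  assumes I: "finite I" and J: "finite J"
  shows "ob_comp d q (\<lambda>c. \<Sum>i\<in>I. a i * F i c) (\<lambda>c. \<Sum>j\<in>J. b j * G j c) e
       = (\<Sum>i\<in>I. \<Sum>j\<in>J. a i * b j * ob_comp d q (F i) (G j) e)"
proof -
  have pt: "(if P then (\<Sum>i\<in>I. a i * F i B1) * (\<Sum>j\<in>J. b j * G j B2) * Q else 0)
     = (\<Sum>i\<in>I. \<Sum>j\<in>J. a i * b j * (if P then F i B1 * G j B2 * Q else 0))" for P B1 B2 and Q :: complex
  proof (cases P)
    case True
    have "(\<Sum>i\<in>I. a i * F i B1) * (\<Sum>j\<in>J. b j * G j B2) * Q = (\<Sum>i\<in>I. \<Sum>j\<in>J. (a i * F i B1) * (b j * G j B2)) * Q"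
      by (simp only: sum_product)
    also have "\<dots> = (\<Sum>i\<in>I. \<Sum>j\<in>J. a i * b j * (F i B1 * G j B2 * Q))"
      by (simp only: sum_distrib_right) (simp only: mult_ac)
    finally show ?thesis using True by simp
  next
    case False thus ?thesis by (simp only: if_False mult_zero_right sum.neutral_const)
  qed
  have "ob_comp d q (\<lambda>c. \<Sum>i\<in>I. a i * F i c) (\<lambda>c. \<Sum>j\<in>J. b j * G j c) e
     = (\<Sum>B1\<in>gen_brauer d. \<Sum>B2\<in>gen_brauer d. \<Sum>i\<in>I. \<Sum>j\<in>J. a i * b j *
          (if comp_diag d B1 B2 = e then F i B1 * G j B2 * q ^ n_loops d B1 B2 else 0))"
    unfolding ob_comp_def pt ..
  also have "\<dots> = (\<Sum>i\<in>I. \<Sum>j\<in>J. \<Sum>B1\<in>gen_brauer d. \<Sum>B2\<in>gen_brauer d. a i * b j *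
          (if comp_diag d B1 B2 = e then F i B1 * G j B2 * q ^ n_loops d B1 B2 else 0))"
    by (simp only: sum_swap3[of _ _ I] sum_swap3[of _ "gen_brauer d"])
  also have "\<dots> = (\<Sum>i\<in>I. \<Sum>j\<in>J. a i * b j * ob_comp d q (F i) (G j) e)"
    unfolding ob_comp_def by (simp only: sum_distrib_left)
  finally show ?thesis .
qed

lemma Psi_br_mult:
  "Psi d (br_mult d \<delta> x y) (u,s) c
      = (\<Sum>b1\<in>brauer d. \<Sum>b2\<in>brauer d. x b1 * y b2 * \<delta> ^ n_loops d b1 b2 * Mb d (comp_diag d b1 b2) (u,s) c)"
proof -
  let ?B = "brauer d"
  have "Psi d (br_mult d \<delta> x y) (u,s) c = (\<Sum>b\<in>?B. \<Sum>b1\<in>?B. \<Sum>b2\<in>?B.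
      (if comp_diag d b1 b2 = b then x b1 * y b2 * \<delta> ^ n_loops d b1 b2 * Mb d b (u,s) c else 0))"
    unfolding Psi_def br_mult_def sum_distrib_right by (intro sum.cong refl) simp
  also have "\<dots> = (\<Sum>b1\<in>?B. \<Sum>b2\<in>?B. \<Sum>b\<in>?B.
      (if comp_diag d b1 b2 = b then x b1 * y b2 * \<delta> ^ n_loops d b1 b2 * Mb d b (u,s) c else 0))"
    by (rule sum_swap3)
  also have "\<dots> = (\<Sum>b1\<in>?B. \<Sum>b2\<in>?B. x b1 * y b2 * \<delta> ^ n_loops d b1 b2 * Mb d (comp_diag d b1 b2) (u,s) c)"
    by (intro sum.cong refl) (simp add: sum.delta'[OF finite_brauer] comp_diag_brauer)
  finally show ?thesis .
qed

lemma mat_comp_Psi: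
  assumes "u \<in> oseq_hat d" "s \<in> oseq_hat d"
  shows "mat_comp d q (Psi d x) (Psi d y) (u,s) c = (\<Sum>b1\<in>brauer d. \<Sum>b2\<in>brauer d.
      x b1 * y b2 * (\<Sum>t\<in>oseq_hat d. ob_comp d q (Mb d b1 (u,t)) (Mb d b2 (t,s)) c))"
proof -
  let ?B = "brauer d"
  have "mat_comp d q (Psi d x) (Psi d y) (u,s) c = (\<Sum>t\<in>oseq_hat d.
      ob_comp d q (\<lambda>c. \<Sum>b1\<in>?B. x b1 * Mb d b1 (u,t) c) (\<lambda>c. \<Sum>b2\<in>?B. y b2 * Mb d b2 (t,s) c) c)"
    unfolding mat_comp_def Psi_def using assms by simp
  also have "\<dots> = (\<Sum>t\<in>oseq_hat d. \<Sum>b1\<in>?B. \<Sum>b2\<in>?B. x b1 * y b2 * ob_comp d q (Mb d b1 (u,t)) (Mb d b2 (t,s)) c)"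
    by (intro sum.cong refl ob_comp_sum_sum finite_brauer)
  also have "\<dots> = (\<Sum>b1\<in>?B. \<Sum>b2\<in>?B. \<Sum>t\<in>oseq_hat d. x b1 * y b2 * ob_comp d q (Mb d b1 (u,t)) (Mb d b2 (t,s)) c)"
    by (rule sum_swap3)
  finally show ?thesis by (simp only: sum_distrib_left)
qed

lemma Psi_mult:
  fixes q :: complex
  shows "Psi d (br_mult d (2 * q + 1) x y) = mat_comp d q (Psi d x) (Psi d y)"
proof (intro ext)
  fix us c
  obtain u s :: "ori list" where us: "us = (u, s)" by fastforce
  show "Psi d (br_mult d (2 * q + 1) x y) us c = mat_comp d q (Psi d x) (Psi d y) us c"
  proof (cases "u \<in> oseq_hat d \<and> s \<in> oseq_hat d")
    case True
    then have l: "length u = d" "length s = d" unfolding oseq_hat_def by auto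
    have "mat_comp d q (Psi d x) (Psi d y) (u,s) c = (\<Sum>b1\<in>brauer d. \<Sum>b2\<in>brauer d.
        x b1 * y b2 * ((2 * q + 1) ^ n_loops d b1 b2 * Mb d (comp_diag d b1 b2) (u,s) c))"
      unfolding mat_comp_Psi[OF True[THEN conjunct1] True[THEN conjunct2]]
      by (intro sum.cong refl) (simp add: sum_middle_ob_comp[OF _ _ l])
    then show ?thesis unfolding us Psi_br_mult by (simp add: mult.assoc)
  next
    case False
    then have "mat_comp d q (Psi d x) (Psi d y) (u,s) c = 0" unfolding mat_comp_def by auto
    moreover have "Psi d (br_mult d (2 * q + 1) x y) (u,s) c = 0"
      unfolding Psi_br_mult using Mb_outside[OF False] by simp
    ultimately show ?thesis unfolding us by simp
  qed
qed

definition identity_diag :: "nat \<Rightarrow> diag" where "identity_diag d = {{Inl i, Inr i} | i. i < d}"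

lemma identity_diag_blocks: "B \<in> identity_diag d \<longleftrightarrow> (\<exists>i<d. B = {Inl i, Inr i})"
  unfolding identity_diag_def by blast

lemma identity_diag_brauer: "identity_diag d \<in> brauer d"
  unfolding brauer_def gen_brauer_def
proof (intro CollectI conjI ballI)
  fix B assume "B \<in> identity_diag d"
  then obtain i where i: "i < d" "B = {Inl i, Inr i}" unfolding identity_diag_blocks by blast
  thus "B \<subseteq> verts d" "card B = 1 \<or> card B = 2" "card B = 2" by (auto simp: verts_iff)
next
  fix x assume x: "x \<in> verts d"
  define i where "i = (case x of Inl i \<Rightarrow> i | Inr i \<Rightarrow> i)"
  have i: "i < d" "x \<in> {Inl i, Inr i}" using x unfolding i_def verts_iff by (cases x; simp)+
  show "\<exists>!B. B \<in> identity_diag d \<and> x \<in> B"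
  proof (rule ex1I[of _ "{Inl i, Inr i}"])
    show "{Inl i, Inr i} \<in> identity_diag d \<and> x \<in> {Inl i, Inr i}" using i unfolding identity_diag_blocks by blast
  next
    fix B assume "B \<in> identity_diag d \<and> x \<in> B"
    then obtain j where "j < d" "B = {Inl j, Inr j}" "x \<in> B" unfolding identity_diag_blocks by blast
    thus "B = {Inl i, Inr i}" using i by auto
  qed
qed

lemma partner_identity: assumes i: "i < d"
  shows "partner (identity_diag d) (Inl i) = Inr i" "partner (identity_diag d) (Inr i) = Inl i"
proof -
  have m: "{Inl i, Inr i} \<in> identity_diag d" unfolding identity_diag_blocks using i by blast
  have v: "Inl i \<in> verts d" "Inr i \<in> verts d" using i by (auto simp: verts_iff)
  have "{Inl i, Inr i} = {Inl i, partner (identity_diag d) (Inl i)}" using block_eq_partner[OF brauer_gen_brauer[OF identity_diag_brauer] v(1) m] by simp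
  thus "partner (identity_diag d) (Inl i) = Inr i" by (auto simp: doubleton_eq_iff)
  have "{Inl i, Inr i} = {Inr i, partner (identity_diag d) (Inr i)}" using block_eq_partner[OF brauer_gen_brauer[OF identity_diag_brauer] v(2) m] by simp
  thus "partner (identity_diag d) (Inr i) = Inl i" by (auto simp: doubleton_eq_iff)
qed

lemma orientable_identity_iff:
  assumes t: "length t = d" and s: "length s = d"
  shows "orientable d (identity_diag d) t s \<longleftrightarrow> t = s"
proof -
  have "orientable d (identity_diag d) t s \<longleftrightarrow> (\<forall>i<d. t!i = s!i)"
  proof
    assume ok: "orientable d (identity_diag d) t s"
    show "\<forall>i<d. t!i = s!i"
    proof (intro allI impI)
      fix i assume i: "i < d"
      have "Inl i \<in> verts d" using i by (simp add: verts_iff)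
      hence "(t!i = Circ) = (s!i = Circ) \<and> (t!i \<noteq> Circ \<longrightarrow> (t!i = Up) = (s!i = Up))"
        using ok partner_identity[OF i] unfolding orientable_def vlabel_def outgoing_def by auto
      thus "t!i = s!i" by (cases "t!i"; cases "s!i") auto
    qed
  next
    assume e: "\<forall>i<d. t!i = s!i"
    show "orientable d (identity_diag d) t s" unfolding orientable_def
    proof
      fix x assume "x \<in> verts d"
      then obtain i where i: "i < d" "x = Inl i \<or> x = Inr i" unfolding verts_iff by (cases x) auto
      show "(vlabel t s x = Circ) = (vlabel t s (partner (identity_diag d) x) = Circ) \<and>
         (vlabel t s x \<noteq> Circ \<longrightarrow> outgoing t s x \<noteq> outgoing t s (partner (identity_diag d) x))"
        using i partner_identity[OF i(1)] e unfolding vlabel_def outgoing_def by (cases "s!i") auto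
    qed
  qed
  also have "\<dots> \<longleftrightarrow> t = s" using t s by (auto intro: nth_equalityI)
  finally show ?thesis .
qed

lemma cut_circ_identity: assumes s: "length s = d" shows "cut_circ d (identity_diag d) (vlabel s s) = ob_id d s"
proof (intro set_eqI iffI)
  fix B assume "B \<in> cut_circ d (identity_diag d) (vlabel s s)"
  then consider "B \<in> identity_diag d" "\<forall>x\<in>B. vlabel s s x \<noteq> Circ" | x where "x \<in> verts d" "vlabel s s x = Circ" "B = {x}"
    unfolding cut_circ_def by blast
  thus "B \<in> ob_id d s"
  proof cases
    case 1
    then obtain i where i: "i < d" "B = {Inl i, Inr i}" unfolding identity_diag_blocks by blast
    hence "s!i \<noteq> Circ" using 1(2) unfolding vlabel_def by auto
    thus ?thesis unfolding ob_id_def using i by blast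
  next
    case 2
    then obtain i where i: "i < d" "x = Inl i \<or> x = Inr i" unfolding verts_iff by (cases x) auto
    hence "s!i = Circ" using 2(2) unfolding vlabel_def by auto
    thus ?thesis unfolding ob_id_def using i 2(3) by blast
  qed
next
  fix B assume "B \<in> ob_id d s"
  then consider i where "i < d" "s!i \<noteq> Circ" "B = {Inl i, Inr i}" | i where "i < d" "s!i = Circ" "B = {Inl i}"
    | i where "i < d" "s!i = Circ" "B = {Inr i}"
    unfolding ob_id_def by blast
  thus "B \<in> cut_circ d (identity_diag d) (vlabel s s)"
  proof cases
    case 1
    hence "B \<in> identity_diag d" unfolding identity_diag_blocks by blast
    moreover have "\<forall>x\<in>B. vlabel s s x \<noteq> Circ" using 1 unfolding vlabel_def by auto
    ultimately show ?thesis unfolding cut_circ_def by blast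
  next
    case 2
    hence "Inl i \<in> verts d" "vlabel s s (Inl i) = Circ" unfolding vlabel_def by (auto simp: verts_iff)
    thus ?thesis unfolding cut_circ_def using 2(3) by blast
  next
    case 3
    hence "Inr i \<in> verts d" "vlabel s s (Inr i) = Circ" unfolding vlabel_def by (auto simp: verts_iff)
    thus ?thesis unfolding cut_circ_def using 3(3) by blast
  qed
qed

lemma Psi_one: "Psi d (br_one d) = mat_id d"
proof (intro ext)
  fix ts c
  obtain t s :: "ori list" where ts: "ts = (t, s)" by fastforce
  have "Psi d (br_one d) (t,s) c = (\<Sum>b\<in>brauer d. (if b = identity_diag d then 1 else 0) * Mb d b (t,s) c)"
    unfolding Psi_def br_one_def bvec_def identity_diag_def by (intro sum.cong refl)
  also have "\<dots> = (\<Sum>b\<in>brauer d. if b = identity_diag d then Mb d b (t,s) c else 0)"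
    by (intro sum.cong refl) simp
  also have "\<dots> = Mb d (identity_diag d) (t,s) c" using identity_diag_brauer finite_brauer by simp
  also have "\<dots> = mat_id d (t,s) c"
  proof (cases "t \<in> oseq_hat d \<and> s \<in> oseq_hat d")
    case True
    hence l: "length t = d" "length s = d" unfolding oseq_hat_def by auto
    show ?thesis
      using Mb_eq_cut_circ[OF identity_diag_brauer] True orientable_identity_iff[OF l] cut_circ_identity[OF l(2)] unfolding mat_id_def by auto
  next
    case False thus ?thesis using Mb_outside[OF False] unfolding mat_id_def by auto
  qed
  finally show "Psi d (br_one d) ts c = mat_id d ts c" using ts by simp
qed

definition vert_key :: "vert \<Rightarrow> nat" where "vert_key x = (case x of Inl i \<Rightarrow> 2 * i | Inr i \<Rightarrow> 2 * i + 1)"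

lemma vert_key_inj: "vert_key x = vert_key y \<Longrightarrow> x = y"
  unfolding vert_key_def by (cases x; cases y; simp; presburger)

lemma orientation_exists:
  assumes b: "b \<in> brauer d"
  shows "\<exists>t s. t \<in> oseq_hat d \<and> s \<in> oseq_hat d \<and> orientable d b t s \<and> (\<forall>x\<in>verts d. vlabel t s x \<noteq> Circ)"
proof -
  define lab where "lab x = (if (vert_key x < vert_key (partner b x)) = isl x then Up else Down)" for x
  define t where "t = map (\<lambda>i. lab (Inl i)) [0..<d]"
  define s where "s = map (\<lambda>i. lab (Inr i)) [0..<d]"
  have lv: "vlabel t s x = lab x" if "x \<in> verts d" for x
    using that unfolding vlabel_def t_def s_def by (cases x) (auto simp: verts_iff)
  have nc: "lab x \<noteq> Circ" for x unfolding lab_def by simp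
  have wd: "outgoing t s x = (vert_key x < vert_key (partner b x))" if "x \<in> verts d" for x
    unfolding outgoing_def lv[OF that] lab_def by auto
  have ok: "orientable d b t s" unfolding orientable_def
  proof
    fix x assume x: "x \<in> verts d"
    have px: "partner b x \<in> verts d" by (rule partner_in_verts[OF brauer_gen_brauer[OF b] x])
    have "vert_key x \<noteq> vert_key (partner b x)" using vert_key_inj partner_neq[OF b x] by metis
    hence "outgoing t s x \<noteq> outgoing t s (partner b x)" using wd[OF x] wd[OF px] partner_partner[OF brauer_gen_brauer[OF b] x] by auto
    thus "(vlabel t s x = Circ) = (vlabel t s (partner b x) = Circ) \<and> (vlabel t s x \<noteq> Circ \<longrightarrow> outgoing t s x \<noteq> outgoing t s (partner b x))"
      using lv[OF x] lv[OF px] nc by simp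
  qed
  have "t \<in> oseq_hat d" "s \<in> oseq_hat d" unfolding oseq_hat_def t_def s_def by simp_all
  moreover have "\<forall>x\<in>verts d. vlabel t s x \<noteq> Circ" using lv nc by simp
  ultimately show ?thesis using ok by blast
qed

lemma Mb_full_orientation:
  assumes b: "b \<in> brauer d" and b': "b' \<in> brauer d" and t: "t \<in> oseq_hat d" and s: "s \<in> oseq_hat d"
    and ok: "orientable d b t s" and nc: "\<forall>x\<in>verts d. vlabel t s x \<noteq> Circ"
  shows "Mb d b' (t,s) b = (if b' = b then 1 else 0)"
proof (cases "orientable d b' t s")
  case True
  have e1: "{B \<in> b'. \<forall>x\<in>B. vlabel t s x \<noteq> Circ} = b'"
    using nc gen_brauer_block_subset[OF brauer_gen_brauer[OF b']] by auto
  have e2: "{{x} | x. x \<in> verts d \<and> vlabel t s x = Circ} = {}"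
    using nc by auto
  have "cut_circ d b' (vlabel t s) = b'"
    unfolding cut_circ_def e1 e2 by simp
  thus ?thesis using Mb_eq_cut_circ[OF b'] True t s unfolding bvec_def by auto
next
  case False
  hence "b' \<noteq> b" using ok by blast
  thus ?thesis using Mb_eq_cut_circ[OF b'] False by simp
qed

text \<open>At an orientation without \<open>\<circ>\<close> that orients \<open>b\<close>, the \<open>b\<close>-coordinate of \<open>\<Psi>(z)\<close> is
  the coefficient of \<open>b\<close> in \<open>z\<close>.\<close>

lemma Psi_coeff:
  assumes b: "b \<in> brauer d"
  obtains t s where "\<And>z. Psi d z (t,s) b = z b"
proof -
  obtain t s where ts: "t \<in> oseq_hat d" "s \<in> oseq_hat d" "orientable d b t s"
      "\<forall>x\<in>verts d. vlabel t s x \<noteq> Circ"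
    using orientation_exists[OF b] by blast
  have "Psi d z (t,s) b = z b" for z
  proof -
    have "Psi d z (t,s) b = (\<Sum>b'\<in>brauer d. if b' = b then z b' else 0)"
      unfolding Psi_def using Mb_full_orientation[OF b _ ts] by (intro sum.cong refl) simp
    also have "\<dots> = z b" using b finite_brauer by simp
    finally show ?thesis .
  qed
  then show ?thesis using that by blast
qed

lemma Psi_inj: "inj_on (Psi d) (br_alg d)"
proof (rule inj_onI, rule ext)
  fix x y b assume x: "x \<in> br_alg d" and y: "y \<in> br_alg d" and e: "Psi d x = Psi d y"
  show "x b = y b"
  proof (cases "b \<in> brauer d")
    case True
    then obtain t s where "\<And>z. Psi d z (t,s) b = z b" by (rule Psi_coeff) blast
    then show ?thesis using e by metis
  next
    case False
    then show ?thesis using x y unfolding br_alg_def by simp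
  qed
qed

theorem proposition5p3:
  fixes m n d :: nat
  defines "\<delta> \<equiv> (of_int (2 * int m + 1 - 2 * int n) :: complex)"
      and "q \<equiv> (of_int (int m - int n) :: complex)"
  shows "(\<forall>x\<in>br_alg d. \<forall>y\<in>br_alg d.
            Psi d (br_mult d \<delta> x y) = mat_comp d q (Psi d x) (Psi d y))
       \<and> Psi d (br_one d) = mat_id d
       \<and> inj_on (Psi d) (br_alg d)"
proof -
  have dq: "\<delta> = 2 * q + 1" unfolding \<delta>_def q_def by simp
  show ?thesis unfolding dq using Psi_mult Psi_one Psi_inj by blast
qed

end
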